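(* Let $k,\Delta$ be positive integers, let $\varepsilon>0$, let $T$ be a finite tree, and let $G$ be a subgraph of $T\boxtimes K_k$ with maximum degree at most $\Delta$. Then there is a subdivision $\tilde G$ of $G$ with growth $f_{\tilde G}(r)\leq (k\Delta+\varepsilon)r+1$ for every positive integer $r$.
   Context: The growth of a finite graph $G$ is the function $f_G\colon\mathbb{N}\to\mathbb{N}$ where $f_G(r)$ is the maximum of $|V(H)|$ over all subgraphs $H$ of $G$ of radius at most $r$. $K_k$ is the complete graph on $k$ vertices. The strong product $G\boxtimes H$ has vertex set $V(G)\times V(H)$, with distinct vertices $(v,w),(v',w')$ adjacent iff ($vv'\in E(G)$ and $w=w'$), or ($v=v'$ and $ww'\in E(H)$), or ($vv'\in E(G)$ and $ww'\in E(H)$). A subdivision of $G$ is a graph obtained by replacing each edge $vw$ by a path with endpoints $v$ and $w$, internally disjoint from the rest of the graph. *)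

theory Defs
  imports Complex_Main
begin

type_synonym 'a ugraph = "'a set \<times> 'a set set"

definition verts :: "'a ugraph \<Rightarrow> 'a set" where "verts G = fst G"
definition edges :: "'a ugraph \<Rightarrow> 'a set set" where "edges G = snd G"

definition ugraph :: "'a ugraph \<Rightarrow> bool" where
  "ugraph G \<longleftrightarrow> finite (verts G) \<and>
     (\<forall>e\<in>edges G. \<exists>u v. e = {u, v} \<and> u \<noteq> v \<and> u \<in> verts G \<and> v \<in> verts G)"

definition subgraph :: "'a ugraph \<Rightarrow> 'a ugraph \<Rightarrow> bool" where
  "subgraph H G \<longleftrightarrow> ugraph H \<and> verts H \<subseteq> verts G \<and> edges H \<subseteq> edges G"

definition walk :: "'a ugraph \<Rightarrow> 'a list \<Rightarrow> bool" where
  "walk G xs \<longleftrightarrow> xs \<noteq> [] \<and> set xs \<subseteq> verts G \<and>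
     (\<forall>i. Suc i < length xs \<longrightarrow> {xs ! i, xs ! Suc i} \<in> edges G)"

definition path :: "'a ugraph \<Rightarrow> 'a list \<Rightarrow> bool" where
  "path G xs \<longleftrightarrow> walk G xs \<and> distinct xs"

definition path_edges :: "'a list \<Rightarrow> 'a set set" where
  "path_edges xs = {{xs ! i, xs ! Suc i} | i. Suc i < length xs}"

definition connected_graph :: "'a ugraph \<Rightarrow> bool" where
  "connected_graph G \<longleftrightarrow> verts G \<noteq> {} \<and>
     (\<forall>u\<in>verts G. \<forall>v\<in>verts G. \<exists>xs. walk G xs \<and> hd xs = u \<and> last xs = v)"

definition has_cycle :: "'a ugraph \<Rightarrow> bool" where
  "has_cycle G \<longleftrightarrow> (\<exists>xs. path G xs \<and> length xs \<ge> 3 \<and> {last xs, hd xs} \<in> edges G)"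

definition tree :: "'a ugraph \<Rightarrow> bool" where
  "tree T \<longleftrightarrow> ugraph T \<and> connected_graph T \<and> \<not> has_cycle T"

definition max_degree_le :: "'a ugraph \<Rightarrow> nat \<Rightarrow> bool" where
  "max_degree_le G d \<longleftrightarrow> (\<forall>v\<in>verts G. card {e\<in>edges G. v \<in> e} \<le> d)"

text \<open>Distance at most r: a walk with at most r edges.\<close>
definition dist_le :: "'a ugraph \<Rightarrow> 'a \<Rightarrow> 'a \<Rightarrow> nat \<Rightarrow> bool" where
  "dist_le G u v r \<longleftrightarrow> (\<exists>xs. walk G xs \<and> hd xs = u \<and> last xs = v \<and> length xs \<le> Suc r)"

definition radius_le :: "'a ugraph \<Rightarrow> nat \<Rightarrow> bool" where
  "radius_le G r \<longleftrightarrow> (\<exists>c\<in>verts G. \<forall>v\<in>verts G. dist_le G c v r)"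

definition growth :: "'a ugraph \<Rightarrow> nat \<Rightarrow> nat" where
  "growth G r = Max ({card (verts H) | H. subgraph H G \<and> radius_le H r} \<union> {0})"

definition complete_graph :: "nat \<Rightarrow> nat ugraph" where
  "complete_graph k = ({0..<k}, {{i, j} | i j. i < k \<and> j < k \<and> i \<noteq> j})"

definition strong_product :: "'a ugraph \<Rightarrow> 'b ugraph \<Rightarrow> ('a \<times> 'b) ugraph" where
  "strong_product G H = (verts G \<times> verts H,
     {{(v, w), (v', w')} | v w v' w'. v \<in> verts G \<and> v' \<in> verts G \<and> w \<in> verts H \<and> w' \<in> verts H \<and>
        (v, w) \<noteq> (v', w') \<and>
        ((v = v' \<or> {v, v'} \<in> edges G) \<and> (w = w' \<or> {w, w'} \<in> edges H))})"

definition subdivision :: "'b ugraph \<Rightarrow> 'a ugraph \<Rightarrow> ('a \<Rightarrow> 'b) \<Rightarrow> bool" where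
  "subdivision H G \<phi> \<longleftrightarrow> ugraph H \<and> inj_on \<phi> (verts G) \<and>
     (\<exists>P :: 'a set \<Rightarrow> 'b list.
        (\<forall>e\<in>edges G. \<exists>u v. e = {u, v} \<and> path H (P e) \<and> hd (P e) = \<phi> u \<and> last (P e) = \<phi> v) \<and>
        (\<forall>e\<in>edges G. (set (P e) - {hd (P e), last (P e)}) \<inter> \<phi> ` verts G = {}) \<and>
        (\<forall>e\<in>edges G. \<forall>e'\<in>edges G. e \<noteq> e' \<longrightarrow>
             (set (P e) - {hd (P e), last (P e)}) \<inter> set (P e') = {}) \<and>
        verts H = \<phi> ` verts G \<union> (\<Union>e\<in>edges G. set (P e)) \<and>
        edges H = (\<Union>e\<in>edges G. path_edges (P e)))"

end

theory Submission
  imports Defs "HOL-Library.Countable_Set"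
begin

lemma walk_singleton_iff [simp]: "walk G [x] \<longleftrightarrow> x \<in> verts G"
  by (simp add: walk_def)

lemma walk_Cons_Cons_iff:
  "walk G (x # y # xs) \<longleftrightarrow> x \<in> verts G \<and> {x, y} \<in> edges G \<and> walk G (y # xs)"
proof -
  have "(\<forall>i. Suc i < length (x # y # xs) \<longrightarrow> P i) \<longleftrightarrow> P 0 \<and> (\<forall>i. Suc i < length (y # xs) \<longrightarrow> P (Suc i))"
    for P by (metis All_less_Suc2 Suc_less_eq length_Cons)
  then show ?thesis
    unfolding walk_def by auto
qed

lemma walk_append_iff:
  assumes "xs \<noteq> []" "ys \<noteq> []"
  shows "walk G (xs @ ys) \<longleftrightarrow> walk G xs \<and> walk G ys \<and> {last xs, hd ys} \<in> edges G"
  using assms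
proof (induction xs rule: induct_list012)
  case (2 x)
  then obtain y ys' where "ys = y # ys'" by (cases ys) auto
  then show ?case by (auto simp: walk_Cons_Cons_iff)
qed (auto simp: walk_Cons_Cons_iff)

lemma walk_rev: "walk G xs \<Longrightarrow> walk G (rev xs)"
proof (induction xs rule: induct_list012)
  case (3 x y zs)
  then have "walk G (rev (y # zs))" "{x, y} \<in> edges G" "x \<in> verts G"
    by (auto simp: walk_Cons_Cons_iff)
  then show ?case
    by (subst rev.simps, subst walk_append_iff) (auto simp: insert_commute)
qed (auto simp: walk_def)

lemma walk_join:
  assumes "walk G xs" "walk G ys" "last xs = hd ys"
  shows "walk G (xs @ tl ys)"
proof (cases "tl ys = []")
  case False
  then obtain y z zs where ys: "ys = y # z # zs"
    by (cases ys; cases "tl ys") auto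
  then show ?thesis
    using assms walk_append_iff[of xs "z # zs" G] by (auto simp: walk_Cons_Cons_iff walk_def)
qed (use assms in simp)

lemma walk_subgraph:
  "walk G xs \<Longrightarrow> verts G \<subseteq> verts G' \<Longrightarrow> edges G \<subseteq> edges G' \<Longrightarrow> walk G' xs"
  unfolding walk_def by blast

lemma walk_shortcut_to_path:
  assumes "walk G xs"
  shows "\<exists>ys. path G ys \<and> hd ys = hd xs \<and> last ys = last xs \<and> set ys \<subseteq> set xs"
  using assms
proof (induction "length xs" arbitrary: xs rule: less_induct)
  case less
  show ?case
  proof (cases "distinct xs")
    case True
    then show ?thesis using less.prems by (auto simp: path_def)
  next
    case False
    then obtain as y bs cs where xs: "xs = as @ [y] @ bs @ [y] @ cs"
      using not_distinct_decomp by blast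
    define xs' where "xs' = (as @ [y]) @ cs"
    have "walk G ((as @ [y] @ bs) @ (y # cs))"
      using less.prems xs by simp
    moreover have "as @ [y] @ bs \<noteq> []"
      by simp
    ultimately have "walk G ((as @ [y]) @ bs)" "walk G (y # cs)"
      using walk_append_iff[of "as @ [y] @ bs" "y # cs" G] by auto
    then have "walk G (as @ [y])"
      using walk_append_iff[of "as @ [y]" bs G] by (cases "bs = []") auto
    then have "walk G xs'"
      using walk_join[of G "as @ [y]" "y # cs"] \<open>walk G (y # cs)\<close> unfolding xs'_def by simp
    moreover have "length xs' < length xs"
      using xs xs'_def by simp
    ultimately obtain ys where "path G ys" "hd ys = hd xs'" "last ys = last xs'" "set ys \<subseteq> set xs'"
      using less.hyps by blast
    moreover have "hd xs' = hd xs" "last xs' = last xs" "set xs' \<subseteq> set xs"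
      using xs xs'_def by (cases as; cases cs; auto)+
    ultimately show ?thesis by auto
  qed
qed

definition connected_within :: "'a ugraph \<Rightarrow> 'a set \<Rightarrow> bool" where
  "connected_within T S \<longleftrightarrow>
     (\<forall>p\<in>S. \<forall>p'\<in>S. \<exists>xs. walk T xs \<and> set xs \<subseteq> S \<and> hd xs = p \<and> last xs = p')"

definition reach_within :: "'a ugraph \<Rightarrow> 'a set \<Rightarrow> 'a \<Rightarrow> 'a \<Rightarrow> bool" where
  "reach_within T R a b \<longleftrightarrow> (\<exists>xs. walk T xs \<and> set xs \<subseteq> R \<and> hd xs = a \<and> last xs = b)"

text \<open>The vertex outside \<open>R\<close> at which the component of \<open>a\<close> in \<open>R\<close> hangs; it is unique when
  \<open>T\<close> is a tree and the vertices outside \<open>R\<close> span a connected subgraph.\<close>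

definition attachment :: "'a ugraph \<Rightarrow> 'a set \<Rightarrow> 'a \<Rightarrow> 'a" where
  "attachment T R a = (THE p. p \<in> verts T - R \<and> (\<exists>b. reach_within T R a b \<and> {b, p} \<in> edges T))"

lemma reach_within_refl: "a \<in> R \<Longrightarrow> a \<in> verts T \<Longrightarrow> reach_within T R a a"
  unfolding reach_within_def by (intro exI[of _ "[a]"]) simp

lemma reach_within_Cons:
  assumes "reach_within T R b w" "a \<in> R" "a \<in> verts T" "{a, b} \<in> edges T"
  shows "reach_within T R a w"
proof -
  obtain xs where xs: "walk T xs" "set xs \<subseteq> R" "hd xs = b" "last xs = w"
    using assms(1) reach_within_def by metis
  then obtain ys where "xs = b # ys"
    by (cases xs) (auto simp: walk_def)
  then show ?thesis
    unfolding reach_within_def using xs assms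
    by (intro exI[of _ "a # xs"]) (auto simp: walk_Cons_Cons_iff)
qed

text \<open>Two different attachment points would close a cycle through \<open>R\<close> and its complement.\<close>

lemma attachment_unique:
  assumes "tree T" and conn: "connected_within T (verts T - R)"
    and reach: "reach_within T R a b'" and "{b', p'} \<in> edges T" "p' \<in> verts T - R"
    and "{a, p} \<in> edges T" "p \<in> verts T - R"
  shows "p' = p"
proof (rule ccontr)
  assume "p' \<noteq> p"
  obtain xs where xs: "walk T xs" "set xs \<subseteq> R" "hd xs = a" "last xs = b'"
    using reach reach_within_def by metis
  have "walk T (rev xs)" "xs \<noteq> []"
    using walk_rev[OF xs(1)] xs(1) by (simp_all add: walk_def)
  then obtain \<pi>\<^sub>1 where \<pi>\<^sub>1: "path T \<pi>\<^sub>1" "hd \<pi>\<^sub>1 = b'" "last \<pi>\<^sub>1 = a" "set \<pi>\<^sub>1 \<subseteq> R"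
    using walk_shortcut_to_path[of T "rev xs"] xs by (metis hd_rev last_rev set_rev subset_trans)
  obtain ys where "walk T ys" "set ys \<subseteq> verts T - R" "hd ys = p" "last ys = p'"
    using conn assms(5,7) unfolding connected_within_def by blast
  then obtain \<pi>\<^sub>2 where \<pi>\<^sub>2: "path T \<pi>\<^sub>2" "hd \<pi>\<^sub>2 = p" "last \<pi>\<^sub>2 = p'" "set \<pi>\<^sub>2 \<subseteq> verts T - R"
    using walk_shortcut_to_path[of T ys] by blast
  have ne: "\<pi>\<^sub>1 \<noteq> []" "\<pi>\<^sub>2 \<noteq> []"
    using \<pi>\<^sub>1 \<pi>\<^sub>2 by (auto simp: path_def walk_def)
  have "length \<pi>\<^sub>2 \<ge> 2"
    using \<pi>\<^sub>2 ne \<open>p' \<noteq> p\<close> by (cases \<pi>\<^sub>2 rule: remdups_adj.cases) auto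
  moreover have "walk T (\<pi>\<^sub>1 @ \<pi>\<^sub>2)"
    using walk_append_iff[of \<pi>\<^sub>1 \<pi>\<^sub>2 T] ne \<pi>\<^sub>1 \<pi>\<^sub>2 assms(6) by (simp add: path_def)
  moreover have "distinct (\<pi>\<^sub>1 @ \<pi>\<^sub>2)"
    using \<pi>\<^sub>1 \<pi>\<^sub>2 by (auto simp: path_def)
  moreover have "{last (\<pi>\<^sub>1 @ \<pi>\<^sub>2), hd (\<pi>\<^sub>1 @ \<pi>\<^sub>2)} \<in> edges T"
    using ne \<pi>\<^sub>1 \<pi>\<^sub>2 assms(4) by (simp add: insert_commute)
  ultimately have "path T (\<pi>\<^sub>1 @ \<pi>\<^sub>2) \<and> length (\<pi>\<^sub>1 @ \<pi>\<^sub>2) \<ge> 3 \<and>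
      {last (\<pi>\<^sub>1 @ \<pi>\<^sub>2), hd (\<pi>\<^sub>1 @ \<pi>\<^sub>2)} \<in> edges T"
    using ne(1) by (auto simp: path_def Suc_le_eq length_greater_0_conv[symmetric] simp del: length_greater_0_conv)
  then have "has_cycle T"
    unfolding has_cycle_def by blast
  then show False
    using \<open>tree T\<close> tree_def by blast
qed

lemma attachment_eqI:
  assumes "tree T" "connected_within T (verts T - R)"
    and "a \<in> R" "a \<in> verts T" "{a, p} \<in> edges T" "p \<in> verts T - R"
  shows "attachment T R a = p"
  unfolding attachment_def
proof (rule the_equality)
  show "p \<in> verts T - R \<and> (\<exists>b. reach_within T R a b \<and> {b, p} \<in> edges T)"
    using assms(5,6) reach_within_refl[OF assms(3,4)] by blast
next
  fix p' assume "p' \<in> verts T - R \<and> (\<exists>b. reach_within T R a b \<and> {b, p'} \<in> edges T)"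
  then obtain b where b: "reach_within T R a b" "{b, p'} \<in> edges T" "p' \<in> verts T - R"
    by blast
  show "p' = p"
    by (rule attachment_unique[OF assms(1,2) b assms(5,6)])
qed

lemma attachment_adjacent:
  assumes "a \<in> R" "b \<in> R" "a \<in> verts T" "b \<in> verts T" "{a, b} \<in> edges T"
  shows "attachment T R a = attachment T R b"
proof -
  have "{b, a} \<in> edges T"
    using assms(5) by (simp add: insert_commute)
  then have "reach_within T R a w \<longleftrightarrow> reach_within T R b w" for w
    using reach_within_Cons[of T R b w a] reach_within_Cons[of T R a w b] assms by blast
  then show ?thesis
    unfolding attachment_def by simp
qed

definition rooted_ranking :: "'a ugraph \<Rightarrow> 'a \<Rightarrow> ('a \<Rightarrow> nat) \<Rightarrow> bool" where
  "rooted_ranking T r\<^sub>0 key \<longleftrightarrow> r\<^sub>0 \<in> verts T \<and> inj_on key (verts T) \<and>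
     (\<forall>a\<in>verts T - {r\<^sub>0}. \<exists>b\<in>verts T. {a, b} \<in> edges T \<and> key a < key b)"

lemma rooted_ranking_walk_to_root:
  assumes "finite (verts T)" "rooted_ranking T r\<^sub>0 key" "a \<in> verts T"
  shows "\<exists>xs. walk T xs \<and> hd xs = a \<and> last xs = r\<^sub>0 \<and> (\<forall>y\<in>set xs. key a \<le> key y)"
  using assms(3)
proof (induction "Max (key ` verts T) - key a" arbitrary: a rule: less_induct)
  case less
  show ?case
  proof (cases "a = r\<^sub>0")
    case True
    then show ?thesis
      using less.prems by (intro exI[of _ "[a]"]) simp
  next
    case False
    then obtain b where b: "b \<in> verts T" "{a, b} \<in> edges T" "key a < key b"
      using assms(2) less.prems unfolding rooted_ranking_def by blast
    moreover have "key b \<le> Max (key ` verts T)"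
      using assms(1) b(1) by simp
    ultimately have "Max (key ` verts T) - key b < Max (key ` verts T) - key a"
      by linarith
    then obtain xs where xs: "walk T xs" "hd xs = b" "last xs = r\<^sub>0" "\<forall>y\<in>set xs. key b \<le> key y"
      using less.hyps b(1) by blast
    then obtain ys where "xs = b # ys"
      by (cases xs) (auto simp: walk_def)
    then show ?thesis
      using xs b less.prems by (intro exI[of _ "a # xs"]) (auto simp: walk_Cons_Cons_iff)
  qed
qed

lemma rooted_ranking_connected_above:
  assumes "finite (verts T)" "rooted_ranking T r\<^sub>0 key"
  shows "connected_within T (verts T - {a. key a < \<kappa>})"
  unfolding connected_within_def
proof (intro ballI)
  fix p p' assume p: "p \<in> verts T - {a. key a < \<kappa>}" and p': "p' \<in> verts T - {a. key a < \<kappa>}"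
  obtain xs where xs: "walk T xs" "hd xs = p" "last xs = r\<^sub>0" "\<forall>y\<in>set xs. key p \<le> key y"
    using rooted_ranking_walk_to_root[OF assms] p by blast
  obtain ys where ys: "walk T ys" "hd ys = p'" "last ys = r\<^sub>0" "\<forall>y\<in>set ys. key p' \<le> key y"
    using rooted_ranking_walk_to_root[OF assms] p' by blast
  have ne: "xs \<noteq> []" "ys \<noteq> []"
    using xs ys by (auto simp: walk_def)
  have "set (tl (rev ys)) \<subseteq> set ys"
    by (metis list.sel(2) list.set_sel(2) set_rev subsetI)
  then have "set (xs @ tl (rev ys)) \<subseteq> set xs \<union> set ys"
    by auto
  moreover have "\<kappa> \<le> key y" if "y \<in> set xs \<union> set ys" for y
    using that xs(4) ys(4) p p' by force
  moreover have "set xs \<union> set ys \<subseteq> verts T"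
    using xs(1) ys(1) by (simp add: walk_def)
  ultimately have "set (xs @ tl (rev ys)) \<subseteq> verts T - {a. key a < \<kappa>}"
    by fastforce
  moreover have "walk T (xs @ tl (rev ys))"
    using walk_join[OF xs(1) walk_rev[OF ys(1)]] xs ys ne by (simp add: hd_rev)
  moreover have "last (xs @ tl (rev ys)) = p'"
  proof (cases "tl (rev ys) = []")
    case True
    then have "ys = [p']"
      using ys(2) ne by (cases ys rule: rev_cases) auto
    then show ?thesis
      using xs ys by simp
  next
    case False
    then show ?thesis
      using ys(2) ne by (simp add: last_tl last_rev)
  qed
  moreover have "hd (xs @ tl (rev ys)) = p"
    using xs(2) ne by simp
  ultimately show "\<exists>zs. walk T zs \<and> set zs \<subseteq> verts T - {a. key a < \<kappa>} \<and> hd zs = p \<and> last zs = p'"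
    by blast
qed

text \<open>Rank by decreasing distance from a root, ties broken by an enumeration of the vertices.\<close>

lemma tree_obtains_rooted_ranking:
  assumes "tree T"
  obtains r\<^sub>0 key where "rooted_ranking T r\<^sub>0 key"
proof -
  have conn: "connected_graph T" and fin: "finite (verts T)"
    using assms unfolding tree_def ugraph_def by auto
  have "verts T \<noteq> {}"
    and walks: "\<And>u v. u \<in> verts T \<Longrightarrow> v \<in> verts T \<Longrightarrow> \<exists>xs. walk T xs \<and> hd xs = u \<and> last xs = v"
    using conn by (simp_all add: connected_graph_def)
  then obtain r\<^sub>0 where r\<^sub>0: "r\<^sub>0 \<in> verts T"
    by auto
  define depth where "depth a = (LEAST d. dist_le T r\<^sub>0 a d)" for a
  have depth: "dist_le T r\<^sub>0 a (depth a)" if a: "a \<in> verts T" for a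
  proof -
    obtain xs where "walk T xs" "hd xs = r\<^sub>0" "last xs = a"
      using walks[OF r\<^sub>0 a] by blast
    then have "dist_le T r\<^sub>0 a (length xs)"
      unfolding dist_le_def by auto
    then show ?thesis
      unfolding depth_def by (rule LeastI)
  qed
  have parent: "\<exists>b\<in>verts T. {a, b} \<in> edges T \<and> depth b < depth a" if a: "a \<in> verts T" "a \<noteq> r\<^sub>0" for a
  proof -
    obtain xs where xs: "walk T xs" "hd xs = r\<^sub>0" "last xs = a" "length xs \<le> Suc (depth a)"
      using depth[OF a(1)] unfolding dist_le_def by blast
    define ys where "ys = butlast xs"
    have "xs \<noteq> []"
      using xs(1) by (simp add: walk_def)
    then have xs_eq: "xs = ys @ [a]"
      using xs(3) ys_def by (metis append_butlast_last_id)
    have ys_ne: "ys \<noteq> []"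
      using xs(2) xs_eq a(2) by auto
    have w: "walk T ys" "{last ys, a} \<in> edges T"
      using xs(1) walk_append_iff[OF ys_ne, of "[a]" T] xs_eq by auto
    have "dist_le T r\<^sub>0 (last ys) (depth a - 1)"
      unfolding dist_le_def using w(1) xs(2,4) xs_eq ys_ne by (intro exI[of _ ys]) auto
    then have "depth (last ys) \<le> depth a - 1"
      unfolding depth_def by (rule Least_le)
    moreover have "depth a \<ge> 1"
      using xs(4) xs_eq ys_ne by (cases ys) auto
    moreover have "last ys \<in> verts T"
      using w(1) ys_ne by (auto simp: walk_def)
    ultimately show ?thesis
      using w(2) by (auto simp: insert_commute)
  qed
  obtain idx :: "'a \<Rightarrow> nat" and n where idx: "idx ` verts T = {i. i < n}" "inj_on idx (verts T)"
    using finite_imp_inj_to_nat_seg[OF fin] by blast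
  define D where "D = Max (depth ` verts T)"
  define key where "key a = (D - depth a) * n + idx a" for a
  have idx_lt: "idx a < n" if "a \<in> verts T" for a
    using idx(1) that by blast
  have "inj_on key (verts T)"
  proof (rule inj_onI)
    fix a b assume a: "a \<in> verts T" and b: "b \<in> verts T" and "key a = key b"
    then have "key a mod n = key b mod n"
      by simp
    then have "idx a = idx b"
      using idx_lt[OF a] idx_lt[OF b] by (simp add: key_def)
    then show "a = b"
      using idx(2) a b by (simp add: inj_on_eq_iff)
  qed
  moreover have "key a < key b" if "a \<in> verts T" "b \<in> verts T" "depth b < depth a" for a b
  proof -
    have "depth a \<le> D"
      using fin that(1) unfolding D_def by simp
    then have "(D - depth a + 1) * n \<le> (D - depth b) * n"
      using that(3) by (intro mult_right_mono) auto
    moreover have "idx a < n"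
      using idx_lt that(1) by blast
    ultimately show ?thesis
      unfolding key_def by (simp add: algebra_simps)
  qed
  moreover have "\<exists>b\<in>verts T. {a, b} \<in> edges T \<and> key a < key b" if a: "a \<in> verts T - {r\<^sub>0}" for a
  proof -
    obtain b where "b \<in> verts T" "{a, b} \<in> edges T" "depth b < depth a"
      using parent a by blast
    with calculation(2) a show ?thesis
      by blast
  qed
  ultimately have "rooted_ranking T r\<^sub>0 key"
    unfolding rooted_ranking_def using r\<^sub>0 by blast
  then show ?thesis ..
qed

definition lipschitz_graph :: "'a ugraph \<Rightarrow> ('a \<Rightarrow> nat) \<Rightarrow> bool" where
  "lipschitz_graph H F \<longleftrightarrow> (\<forall>x y. {x, y} \<in> edges H \<longrightarrow> F y \<le> F x + 1)"

lemma lipschitz_graph_walk: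
  assumes "lipschitz_graph H F" "walk H xs"
  shows "F (last xs) \<le> F (hd xs) + (length xs - 1)"
  using assms(2)
proof (induction xs rule: induct_list012)
  case (3 x y zs)
  then have "F (last (y # zs)) \<le> F y + length zs" "F y \<le> F x + 1"
    using assms(1) by (auto simp: walk_Cons_Cons_iff lipschitz_graph_def)
  then show ?case
    by simp
qed (auto simp: walk_def)

lemma lipschitz_graph_min:
  assumes "lipschitz_graph H F" "lipschitz_graph H F'"
  shows "lipschitz_graph H (\<lambda>x. min (F x) (F' x))"
  unfolding lipschitz_graph_def
proof (intro allI impI)
  fix x y assume "{x, y} \<in> edges H"
  then have "F y \<le> F x + 1" "F' y \<le> F' x + 1"
    using assms unfolding lipschitz_graph_def by blast+
  then show "min (F y) (F' y) \<le> min (F x) (F' x) + 1"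
    by (simp add: min_def)
qed

lemma lipschitz_graph_add_const: "lipschitz_graph H F \<Longrightarrow> lipschitz_graph H (\<lambda>x. c + F x)"
  unfolding lipschitz_graph_def by simp

lemma lipschitz_graph_const: "lipschitz_graph H (\<lambda>x. c)"
  unfolding lipschitz_graph_def by simp

text \<open>A subgraph of radius \<open>r\<close> around \<open>c\<close> lies in the sublevel set \<open>F \<le> r\<close> of any
  1-Lipschitz \<open>F\<close> vanishing at \<open>c\<close>.\<close>

lemma growth_le_if_lipschitz_sublevels:
  assumes "finite (verts H)"
    and "\<And>c. c \<in> verts H \<Longrightarrow> \<exists>F. lipschitz_graph H F \<and> F c = 0 \<and> card {x \<in> verts H. F x \<le> r} \<le> b"
  shows "growth H r \<le> b"
proof -
  have "card (verts H') \<le> b" if H': "subgraph H' H" "radius_le H' r" for H'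
  proof -
    obtain c where c: "c \<in> verts H'" "\<forall>v\<in>verts H'. dist_le H' c v r"
      using H'(2) unfolding radius_le_def by blast
    have sub: "verts H' \<subseteq> verts H" "edges H' \<subseteq> edges H"
      using H'(1) unfolding subgraph_def by auto
    then obtain F where F: "lipschitz_graph H F" "F c = 0" "card {x \<in> verts H. F x \<le> r} \<le> b"
      using assms(2) c(1) by blast
    have "verts H' \<subseteq> {x \<in> verts H. F x \<le> r}"
    proof
      fix v assume v: "v \<in> verts H'"
      then obtain xs where xs: "walk H' xs" "hd xs = c" "last xs = v" "length xs \<le> Suc r"
        using c unfolding dist_le_def by blast
      then have "F v \<le> F c + (length xs - 1)"
        using lipschitz_graph_walk[OF F(1) walk_subgraph[OF xs(1) sub]] by simp
      then show "v \<in> {x \<in> verts H. F x \<le> r}"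
        using F(2) xs(4) v sub by auto
    qed
    then have "card (verts H') \<le> card {x \<in> verts H. F x \<le> r}"
      using assms(1) by (intro card_mono) auto
    then show ?thesis
      using F(3) by simp
  qed
  then have "\<forall>n \<in> {card (verts H') | H'. subgraph H' H \<and> radius_le H' r} \<union> {0}. n \<le> b"
    by auto
  moreover have "finite ({card (verts H') | H'. subgraph H' H \<and> radius_le H' r} \<union> {0})"
    using calculation by (meson finite_nat_set_iff_bounded_le)
  ultimately show ?thesis
    unfolding growth_def by (simp add: Max_le_iff)
qed

locale edge_subdivision =
  fixes G :: "'v ugraph" and L :: "'v set \<Rightarrow> nat"
  assumes ugraph_G: "ugraph G" and L_pos: "\<And>e. e \<in> edges G \<Longrightarrow> 0 < L e"
begin

definition tail :: "'v set \<Rightarrow> 'v" where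
  "tail e = (SOME x. \<exists>y. e = {x, y} \<and> x \<noteq> y)"

definition head :: "'v set \<Rightarrow> 'v" where
  "head e = (SOME y. e = {tail e, y} \<and> tail e \<noteq> y)"

text \<open>Edge \<open>e\<close> becomes a path of length \<open>L e\<close> from \<open>tail e\<close> to \<open>head e\<close>; its interior vertex
  number \<open>j\<close> is the natural number coding the pair (index of \<open>e\<close>, \<open>j\<close>).\<close>

definition sub_vertex :: "'v set \<Rightarrow> nat \<Rightarrow> 'v + nat" where
  "sub_vertex e j = (if j = 0 then Inl (tail e) else if L e \<le> j then Inl (head e)
     else Inr (prod_encode (to_nat_on (edges G) e, j)))"

definition sub_path :: "'v set \<Rightarrow> ('v + nat) list" where
  "sub_path e = map (sub_vertex e) [0..<Suc (L e)]"

definition subdiv :: "('v + nat) ugraph" where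
  "subdiv = (Inl ` verts G \<union> (\<Union>e\<in>edges G. set (sub_path e)), \<Union>e\<in>edges G. path_edges (sub_path e))"

lemma tail_head:
  assumes "e \<in> edges G"
  shows "e = {tail e, head e}" "tail e \<noteq> head e" "tail e \<in> verts G" "head e \<in> verts G"
proof -
  obtain u v where uv: "e = {u, v}" "u \<noteq> v" "u \<in> verts G" "v \<in> verts G"
    using ugraph_G assms unfolding ugraph_def by blast
  have "\<exists>y. e = {tail e, y} \<and> tail e \<noteq> y"
    unfolding tail_def by (rule someI_ex) (use uv in blast)
  then have th: "e = {tail e, head e} \<and> tail e \<noteq> head e"
    unfolding head_def by (rule someI_ex)
  then show "e = {tail e, head e}" "tail e \<noteq> head e"
    by auto
  have "{tail e, head e} = {u, v}"
    using th uv(1) by simp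
  then show "tail e \<in> verts G" "head e \<in> verts G"
    using uv(3,4) by (auto simp: doubleton_eq_iff)
qed

lemma mem_edge_iff: "e \<in> edges G \<Longrightarrow> x \<in> e \<longleftrightarrow> x = tail e \<or> x = head e"
  using tail_head(1)[of e] by auto

lemma edge_subset_iff:
  assumes "e \<in> edges G"
  shows "e \<subseteq> Z \<longleftrightarrow> tail e \<in> Z \<and> head e \<in> Z"
proof -
  have "(e \<subseteq> Z) = ({tail e, head e} \<subseteq> Z)"
    using tail_head(1)[OF assms] by (rule arg_cong)
  then show ?thesis
    by simp
qed

lemma edge_disjoint_iff:
  assumes "e \<in> edges G"
  shows "e \<inter> Z = {} \<longleftrightarrow> tail e \<notin> Z \<and> head e \<notin> Z"
proof -
  have "(e \<inter> Z = {}) = ({tail e, head e} \<inter> Z = {})"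
    using tail_head(1)[OF assms] by (rule arg_cong)
  then show ?thesis
    by simp
qed

lemma finite_verts: "finite (verts G)"
  using ugraph_G unfolding ugraph_def by blast

lemma finite_edges: "finite (edges G)"
proof (rule finite_subset[OF _ finite_Pow_iff[THEN iffD2, OF finite_verts]])
  show "edges G \<subseteq> Pow (verts G)"
    using tail_head by (metis PowI empty_subsetI insert_subset subsetI)
qed

lemma sub_vertex_0 [simp]: "sub_vertex e 0 = Inl (tail e)"
  by (simp add: sub_vertex_def)

lemma sub_vertex_L [simp]: "e \<in> edges G \<Longrightarrow> sub_vertex e (L e) = Inl (head e)"
  using L_pos[of e] by (simp add: sub_vertex_def)

lemma sub_vertex_interior:
  "0 < j \<Longrightarrow> j < L e \<Longrightarrow> sub_vertex e j = Inr (prod_encode (to_nat_on (edges G) e, j))"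
  by (simp add: sub_vertex_def)

lemma sub_vertex_interior_eq_iff:
  assumes "e \<in> edges G" "e' \<in> edges G" "0 < j" "j < L e" "0 < j'" "j' < L e'"
  shows "sub_vertex e j = sub_vertex e' j' \<longleftrightarrow> e = e' \<and> j = j'"
  using assms inj_on_to_nat_on[OF countable_finite[OF finite_edges]]
  by (auto simp: sub_vertex_interior inj_on_eq_iff)

lemma sub_vertex_interior_not_Inl:
  "0 < j \<Longrightarrow> j < L e \<Longrightarrow> sub_vertex e j \<noteq> Inl v"
  by (simp add: sub_vertex_interior)

lemma sub_vertex_eq_Inl_iff:
  assumes "e \<in> edges G" "j \<le> L e"
  shows "sub_vertex e j = Inl v \<longleftrightarrow> (j = 0 \<and> v = tail e) \<or> (j = L e \<and> v = head e)"
  using assms L_pos[OF assms(1)] by (auto simp: sub_vertex_def)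

lemma nth_sub_path: "i \<le> L e \<Longrightarrow> sub_path e ! i = sub_vertex e i"
  unfolding sub_path_def by (simp del: upt_Suc add: nth_map_upt less_Suc_eq_le)

lemma length_sub_path [simp]: "length (sub_path e) = Suc (L e)"
  by (simp add: sub_path_def)

lemma hd_sub_path: "hd (sub_path e) = Inl (tail e)"
  by (simp del: upt_Suc add: sub_path_def upt_conv_Cons)

lemma last_sub_path: "e \<in> edges G \<Longrightarrow> last (sub_path e) = Inl (head e)"
  by (simp add: sub_path_def)

lemma set_sub_path: "set (sub_path e) = sub_vertex e ` {..L e}"
  by (auto simp del: upt_Suc simp: sub_path_def image_iff less_Suc_eq_le)

lemma path_edges_sub_path:
  "path_edges (sub_path e) = {{sub_vertex e j, sub_vertex e (Suc j)} | j. j < L e}"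
proof -
  have "{sub_path e ! j, sub_path e ! Suc j} = {sub_vertex e j, sub_vertex e (Suc j)}" if "j < L e" for j
    using that by (simp add: nth_sub_path)
  then show ?thesis
    unfolding path_edges_def length_sub_path Suc_less_eq by blast
qed

lemma verts_subdiv: "verts subdiv = Inl ` verts G \<union> (\<Union>e\<in>edges G. sub_vertex e ` {..L e})"
  by (simp add: subdiv_def verts_def set_sub_path)

lemma edges_subdiv:
  "edges subdiv = (\<Union>e\<in>edges G. {{sub_vertex e j, sub_vertex e (Suc j)} | j. j < L e})"
  by (simp add: subdiv_def edges_def path_edges_sub_path)

lemma sub_vertex_in_subdiv: "e \<in> edges G \<Longrightarrow> j \<le> L e \<Longrightarrow> sub_vertex e j \<in> verts subdiv"
  unfolding verts_subdiv by blast

lemma verts_subdivE: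
  assumes "x \<in> verts subdiv"
  obtains v where "v \<in> verts G" "x = Inl v"
    | e j where "e \<in> edges G" "0 < j" "j < L e" "x = sub_vertex e j"
proof -
  have branch_or_interior: "x \<in> Inl ` verts G \<or> (0 < j \<and> j < L e)"
    if "e \<in> edges G" "j \<le> L e" "x = sub_vertex e j" for e j
    using tail_head(3,4)[OF that(1)] that by (auto simp: sub_vertex_def)
  have "x \<in> Inl ` verts G \<or> (\<exists>e\<in>edges G. \<exists>j\<le>L e. x = sub_vertex e j)"
    using assms unfolding verts_subdiv by blast
  then show thesis
    using branch_or_interior that by blast
qed

lemma finite_subdiv: "finite (verts subdiv)"
  unfolding verts_subdiv using finite_verts finite_edges by simp

lemma sub_vertex_inj_on: "e \<in> edges G \<Longrightarrow> inj_on (sub_vertex e) {..L e}"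
  using tail_head(2)[of e] by (intro inj_onI) (auto simp: sub_vertex_def split: if_splits)

lemma distinct_sub_path: "e \<in> edges G \<Longrightarrow> distinct (sub_path e)"
  unfolding sub_path_def distinct_map using sub_vertex_inj_on
  by (simp del: upt_Suc add: atLeast0LessThan lessThan_Suc_atMost)

lemma walk_sub_path:
  assumes "e \<in> edges G"
  shows "walk subdiv (sub_path e)"
  unfolding walk_def
proof (intro conjI allI impI)
  show "sub_path e \<noteq> []"
    by (simp add: sub_path_def)
  show "set (sub_path e) \<subseteq> verts subdiv"
    using sub_vertex_in_subdiv[OF assms] by (auto simp: set_sub_path)
  fix i assume "Suc i < length (sub_path e)"
  then have "i < L e" "{sub_path e ! i, sub_path e ! Suc i} = {sub_vertex e i, sub_vertex e (Suc i)}"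
    by (simp_all add: nth_sub_path)
  then show "{sub_path e ! i, sub_path e ! Suc i} \<in> edges subdiv"
    unfolding edges_subdiv using assms by blast
qed

end

context edge_subdivision
begin

lemma sub_path_interior:
  assumes "e \<in> edges G"
  shows "set (sub_path e) - {hd (sub_path e), last (sub_path e)} = sub_vertex e ` {0<..<L e}"
proof -
  have ends: "sub_vertex e j \<in> {Inl (tail e), Inl (head e)} \<longleftrightarrow> j = 0 \<or> j = L e" if "j \<le> L e" for j
    using sub_vertex_eq_Inl_iff[OF assms that] tail_head(2)[OF assms] by auto
  show ?thesis
    unfolding set_sub_path hd_sub_path last_sub_path[OF assms]
  proof (intro equalityI subsetI)
    fix x assume "x \<in> sub_vertex e ` {..L e} - {Inl (tail e), Inl (head e)}"
    then obtain j where "j \<le> L e" "x = sub_vertex e j" "x \<notin> {Inl (tail e), Inl (head e)}"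
      by auto
    then show "x \<in> sub_vertex e ` {0<..<L e}"
      using ends[of j] by (intro image_eqI[of _ _ j]) auto
  next
    fix x assume "x \<in> sub_vertex e ` {0<..<L e}"
    then obtain j where "0 < j" "j < L e" "x = sub_vertex e j"
      by auto
    then show "x \<in> sub_vertex e ` {..L e} - {Inl (tail e), Inl (head e)}"
      using ends[of j] by auto
  qed
qed

lemma ugraph_subdiv: "ugraph subdiv"
  unfolding ugraph_def
proof (intro conjI ballI)
  show "finite (verts subdiv)"
    by (rule finite_subdiv)
  fix x assume "x \<in> edges subdiv"
  then obtain e j where ej: "e \<in> edges G" "j < L e" "x = {sub_vertex e j, sub_vertex e (Suc j)}"
    unfolding edges_subdiv by blast
  moreover have "sub_vertex e j \<noteq> sub_vertex e (Suc j)"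
    using inj_onD[OF sub_vertex_inj_on[OF ej(1)], of j "Suc j"] ej(2) by auto
  moreover have "sub_vertex e j \<in> verts subdiv" "sub_vertex e (Suc j) \<in> verts subdiv"
    using sub_vertex_in_subdiv[OF ej(1)] ej(2) by simp_all
  ultimately show "\<exists>u v. x = {u, v} \<and> u \<noteq> v \<and> u \<in> verts subdiv \<and> v \<in> verts subdiv"
    by blast
qed

lemma sub_vertex_interior_neq:
  assumes "e \<in> edges G" "e' \<in> edges G" "e \<noteq> e'" "0 < j" "j < L e" "j' \<le> L e'"
  shows "sub_vertex e j \<noteq> sub_vertex e' j'"
proof (cases "0 < j' \<and> j' < L e'")
  case True
  then show ?thesis
    using sub_vertex_interior_eq_iff[OF assms(1,2)] assms(3-5) by blast
next
  case False
  then have "sub_vertex e' j' = Inl (tail e') \<or> sub_vertex e' j' = Inl (head e')"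
    using assms(2,6) by (cases "j' = 0") auto
  then show ?thesis
    using sub_vertex_interior_not_Inl[OF assms(4,5)] by metis
qed

lemma subdivision_subdiv: "subdivision subdiv G Inl"
  unfolding subdivision_def
proof (intro conjI exI[of _ sub_path])
  show "ugraph subdiv"
    by (rule ugraph_subdiv)
  show "inj_on Inl (verts G)"
    by simp
  show "\<forall>e\<in>edges G. \<exists>u v. e = {u, v} \<and> path subdiv (sub_path e) \<and>
      hd (sub_path e) = Inl u \<and> last (sub_path e) = Inl v"
    using tail_head(1) walk_sub_path distinct_sub_path
    by (auto simp: path_def hd_sub_path last_sub_path)
  show "\<forall>e\<in>edges G. (set (sub_path e) - {hd (sub_path e), last (sub_path e)}) \<inter> Inl ` verts G = {}"
  proof
    fix e assume e: "e \<in> edges G"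
    show "(set (sub_path e) - {hd (sub_path e), last (sub_path e)}) \<inter> Inl ` verts G = {}"
      unfolding sub_path_interior[OF e] using sub_vertex_interior_not_Inl by fastforce
  qed
  show "\<forall>e\<in>edges G. \<forall>e'\<in>edges G. e \<noteq> e' \<longrightarrow>
      (set (sub_path e) - {hd (sub_path e), last (sub_path e)}) \<inter> set (sub_path e') = {}"
  proof (intro ballI impI)
    fix e e' assume e: "e \<in> edges G" and e': "e' \<in> edges G" and "e \<noteq> e'"
    show "(set (sub_path e) - {hd (sub_path e), last (sub_path e)}) \<inter> set (sub_path e') = {}"
      unfolding sub_path_interior[OF e] unfolding set_sub_path
    proof (rule equals0I)
      fix x assume "x \<in> sub_vertex e ` {0<..<L e} \<inter> sub_vertex e' ` {..L e'}"
      then obtain j j' where "0 < j" "j < L e" "j' \<le> L e'" "x = sub_vertex e j" "x = sub_vertex e' j'"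
        by auto
      then show False
        using sub_vertex_interior_neq[OF e e' \<open>e \<noteq> e'\<close>] by metis
    qed
  qed
  show "verts subdiv = Inl ` verts G \<union> (\<Union>e\<in>edges G. set (sub_path e))"
    by (simp add: subdiv_def verts_def)
  show "edges subdiv = (\<Union>e\<in>edges G. path_edges (sub_path e))"
    by (simp add: subdiv_def edges_def)
qed

lemma lipschitz_graph_subdiv_iff:
  "lipschitz_graph subdiv F \<longleftrightarrow> (\<forall>e\<in>edges G. \<forall>j<L e.
     F (sub_vertex e (Suc j)) \<le> F (sub_vertex e j) + 1 \<and> F (sub_vertex e j) \<le> F (sub_vertex e (Suc j)) + 1)"
    (is "_ \<longleftrightarrow> ?steps")
proof
  assume lip: "lipschitz_graph subdiv F"
  show ?steps
  proof (intro ballI allI impI)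
    fix e j assume "e \<in> edges G" "j < L e"
    then have "{sub_vertex e j, sub_vertex e (Suc j)} \<in> edges subdiv"
      unfolding edges_subdiv by blast
    moreover have "{sub_vertex e (Suc j), sub_vertex e j} = {sub_vertex e j, sub_vertex e (Suc j)}"
      by (rule insert_commute)
    ultimately show "F (sub_vertex e (Suc j)) \<le> F (sub_vertex e j) + 1 \<and>
        F (sub_vertex e j) \<le> F (sub_vertex e (Suc j)) + 1"
      using lip unfolding lipschitz_graph_def by metis
  qed
next
  assume steps: ?steps
  show "lipschitz_graph subdiv F"
    unfolding lipschitz_graph_def
  proof (intro allI impI)
    fix x y assume "{x, y} \<in> edges subdiv"
    then obtain e j where "e \<in> edges G" "j < L e" "{x, y} = {sub_vertex e j, sub_vertex e (Suc j)}"
      unfolding edges_subdiv by blast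
    then show "F y \<le> F x + 1"
      using steps by (auto simp: doubleton_eq_iff)
  qed
qed

definition glue :: "('v \<Rightarrow> nat) \<Rightarrow> ('v set \<Rightarrow> nat \<Rightarrow> nat) \<Rightarrow> 'v + nat \<Rightarrow> nat" where
  "glue f \<phi> x = (case x of Inl v \<Rightarrow> f v
     | Inr n \<Rightarrow> \<phi> (from_nat_into (edges G) (fst (prod_decode n))) (snd (prod_decode n)))"

lemma glue_Inl [simp]: "glue f \<phi> (Inl v) = f v"
  by (simp add: glue_def)

lemma glue_interior: "e \<in> edges G \<Longrightarrow> 0 < j \<Longrightarrow> j < L e \<Longrightarrow> glue f \<phi> (sub_vertex e j) = \<phi> e j"
  by (simp add: glue_def sub_vertex_interior countable_finite[OF finite_edges])

lemma glue_sub_vertex: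
  assumes "e \<in> edges G" "j \<le> L e" "f (tail e) = \<phi> e 0" "f (head e) = \<phi> e (L e)"
  shows "glue f \<phi> (sub_vertex e j) = \<phi> e j"
  using assms glue_interior[OF assms(1)] by (cases "j = 0 \<or> j = L e") auto

lemma lipschitz_graph_glue:
  assumes "\<And>e. e \<in> edges G \<Longrightarrow> f (tail e) = \<phi> e 0 \<and> f (head e) = \<phi> e (L e)"
    and "\<And>e j. e \<in> edges G \<Longrightarrow> j < L e \<Longrightarrow> \<phi> e (Suc j) \<le> \<phi> e j + 1 \<and> \<phi> e j \<le> \<phi> e (Suc j) + 1"
  shows "lipschitz_graph subdiv (glue f \<phi>)"
  unfolding lipschitz_graph_subdiv_iff using assms glue_sub_vertex by simp

end

context edge_subdivision
begin

definition zone :: "'v set \<Rightarrow> nat \<Rightarrow> bool" where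
  "zone Z s \<longleftrightarrow> Z \<subseteq> verts G \<and> (\<forall>e\<in>edges G. if L e \<le> s then e \<subseteq> Z \<or> e \<inter> Z = {} else \<not> e \<subseteq> Z)"

lemma zone_edge_ends:
  assumes "zone Z s" "e \<in> edges G"
  shows "if L e \<le> s then (tail e \<in> Z \<longleftrightarrow> head e \<in> Z) else \<not> (tail e \<in> Z \<and> head e \<in> Z)"
proof -
  have "if L e \<le> s then e \<subseteq> Z \<or> e \<inter> Z = {} else \<not> e \<subseteq> Z"
    using assms unfolding zone_def by blast
  then have "if L e \<le> s then {tail e, head e} \<subseteq> Z \<or> {tail e, head e} \<inter> Z = {}
      else \<not> {tail e, head e} \<subseteq> Z"
    using tail_head(1)[OF assms(2)] by simp
  then show ?thesis
    by (auto split: if_splits)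
qed

lemma zone_short_edge:
  "zone Z s \<Longrightarrow> e \<in> edges G \<Longrightarrow> L e \<le> s \<Longrightarrow> tail e \<in> Z \<longleftrightarrow> head e \<in> Z"
  using zone_edge_ends by fastforce

lemma zone_long_edge:
  "zone Z s \<Longrightarrow> e \<in> edges G \<Longrightarrow> s < L e \<Longrightarrow> \<not> (tail e \<in> Z \<and> head e \<in> Z)"
  using zone_edge_ends by fastforce

text \<open>The zone potential vanishes on \<open>Z\<close>, grows with the distance from \<open>Z\<close> along the edges
  leaving \<open>Z\<close>, and is capped at \<open>s + 1\<close>.\<close>

definition zone_profile :: "'v set \<Rightarrow> nat \<Rightarrow> 'v set \<Rightarrow> nat \<Rightarrow> nat" where
  "zone_profile Z s e j = (if L e \<le> s then (if tail e \<in> Z then 0 else Suc s)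
     else if tail e \<in> Z then min j (Suc s) else if head e \<in> Z then min (L e - j) (Suc s) else Suc s)"

definition zone_potential :: "'v set \<Rightarrow> nat \<Rightarrow> 'v + nat \<Rightarrow> nat" where
  "zone_potential Z s = glue (\<lambda>v. if v \<in> Z then 0 else Suc s) (zone_profile Z s)"

definition zone_count :: "'v set \<Rightarrow> nat \<Rightarrow> nat" where
  "zone_count Z s = card Z + (\<Sum>e\<in>{e \<in> edges G. e \<inter> Z \<noteq> {}}. min (L e - 1) s)"

lemma zone_potential_Inl [simp]: "zone_potential Z s (Inl v) = (if v \<in> Z then 0 else Suc s)"
  by (simp add: zone_potential_def)

lemma zone_profile_ends:
  assumes "zone Z s" "e \<in> edges G"
  shows "zone_profile Z s e 0 = (if tail e \<in> Z then 0 else Suc s)"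
    and "zone_profile Z s e (L e) = (if head e \<in> Z then 0 else Suc s)"
  using zone_short_edge[OF assms] zone_long_edge[OF assms] by (auto simp: zone_profile_def)

lemma zone_potential_sub_vertex:
  "zone Z s \<Longrightarrow> e \<in> edges G \<Longrightarrow> j \<le> L e \<Longrightarrow> zone_potential Z s (sub_vertex e j) = zone_profile Z s e j"
  unfolding zone_potential_def by (rule glue_sub_vertex) (simp_all add: zone_profile_ends)

lemma lipschitz_zone_potential:
  assumes "zone Z s"
  shows "lipschitz_graph subdiv (zone_potential Z s)"
  unfolding zone_potential_def
proof (rule lipschitz_graph_glue)
  fix e assume "e \<in> edges G"
  then show "(if tail e \<in> Z then 0 else Suc s) = zone_profile Z s e 0 \<and>
      (if head e \<in> Z then 0 else Suc s) = zone_profile Z s e (L e)"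
    using zone_profile_ends[OF assms] by simp
next
  fix e j assume "j < L e"
  then show "zone_profile Z s e (Suc j) \<le> zone_profile Z s e j + 1 \<and>
      zone_profile Z s e j \<le> zone_profile Z s e (Suc j) + 1"
    by (auto simp: zone_profile_def)
qed

definition zone_interior :: "'v set \<Rightarrow> nat \<Rightarrow> 'v set \<Rightarrow> ('v + nat) set" where
  "zone_interior Z s e = sub_vertex e ` {j. 0 < j \<and> j < L e \<and> zone_profile Z s e j \<le> s}"

lemma zone_sublevel_subset:
  assumes "zone Z s"
  shows "{x \<in> verts subdiv. zone_potential Z s x \<le> s}
    \<subseteq> Inl ` Z \<union> (\<Union>e\<in>{e \<in> edges G. e \<inter> Z \<noteq> {}}. zone_interior Z s e)"
proof
  fix x assume "x \<in> {x \<in> verts subdiv. zone_potential Z s x \<le> s}"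
  then have x: "x \<in> verts subdiv" "zone_potential Z s x \<le> s"
    by auto
  from x(1) show "x \<in> Inl ` Z \<union> (\<Union>e\<in>{e \<in> edges G. e \<inter> Z \<noteq> {}}. zone_interior Z s e)"
  proof (cases rule: verts_subdivE)
    case (1 v)
    then show ?thesis
      using x(2) by (auto split: if_splits)
  next
    case (2 e j)
    then have "zone_profile Z s e j \<le> s"
      using x(2) zone_potential_sub_vertex[OF assms 2(1)] by simp
    moreover from this have "tail e \<in> Z \<or> head e \<in> Z"
      by (auto simp: zone_profile_def split: if_splits)
    ultimately show ?thesis
      using 2 mem_edge_iff[OF 2(1)] unfolding zone_interior_def by blast
  qed
qed

lemma card_zone_interior:
  assumes "zone Z s" "e \<in> edges G"
  shows "card (zone_interior Z s e) \<le> min (L e - 1) s"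
proof -
  let ?J = "{j. 0 < j \<and> j < L e \<and> zone_profile Z s e j \<le> s}"
  have "card ?J \<le> card {0<..<L e}"
    by (intro card_mono) auto
  then have "card ?J \<le> L e - 1"
    by simp
  moreover have "card ?J \<le> s"
  proof (cases "L e \<le> s")
    case False
    then have "?J \<subseteq> (if tail e \<in> Z then {1..s} else {L e - s..<L e})"
      using zone_long_edge[OF assms] by (auto simp: zone_profile_def)
    then have "card ?J \<le> card (if tail e \<in> Z then {1..s} else {L e - s..<L e})"
      by (intro card_mono) auto
    moreover have "card (if tail e \<in> Z then {1..s} else {L e - s..<L e}) = s"
      using False by (cases "tail e \<in> Z") simp_all
    ultimately show ?thesis
      by linarith
  qed (use \<open>card ?J \<le> L e - 1\<close> in linarith)
  ultimately show ?thesis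
    unfolding zone_interior_def using card_image_le[of ?J "sub_vertex e"] by simp
qed

lemma finite_zone: "zone Z s \<Longrightarrow> finite Z"
  unfolding zone_def by (auto intro: finite_subset[OF _ finite_verts])

lemma card_zone_sublevel:
  assumes "zone Z s"
  shows "card {x \<in> verts subdiv. zone_potential Z s x \<le> s} \<le> zone_count Z s"
proof -
  let ?E = "{e \<in> edges G. e \<inter> Z \<noteq> {}}"
  have fin: "finite ?E"
    using finite_edges by simp
  have "card {x \<in> verts subdiv. zone_potential Z s x \<le> s} \<le> card (Inl ` Z \<union> (\<Union>e\<in>?E. zone_interior Z s e))"
    using zone_sublevel_subset[OF assms] finite_zone[OF assms] fin
    by (intro card_mono) (auto simp: zone_interior_def)
  also have "\<dots> \<le> card (Inl ` Z :: ('v + nat) set) + card (\<Union>e\<in>?E. zone_interior Z s e)"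
    by (rule card_Un_le)
  also have "\<dots> \<le> card Z + (\<Sum>e\<in>?E. card (zone_interior Z s e))"
    using card_image_le[OF finite_zone[OF assms], of Inl] card_UN_le[OF fin, of "zone_interior Z s"]
    by (rule add_mono)
  also have "\<dots> \<le> zone_count Z s"
    unfolding zone_count_def using card_zone_interior[OF assms] by (intro add_left_mono sum_mono) auto
  finally show ?thesis .
qed

lemma card_zone_sublevel_off_path:
  assumes "zone Z s" "e\<^sub>0 \<in> edges G" "s < L e\<^sub>0" "e\<^sub>0 \<inter> Z \<noteq> {}"
  shows "card ({x \<in> verts subdiv. zone_potential Z s x \<le> s} - sub_vertex e\<^sub>0 ` {..L e\<^sub>0}) + s + 1
    \<le> zone_count Z s"
proof -
  let ?E = "{e \<in> edges G. e \<inter> Z \<noteq> {}}"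
  have fin: "finite ?E" "finite Z"
    using finite_edges finite_zone[OF assms(1)] by simp_all
  obtain u where u: "u \<in> Z" "u \<in> e\<^sub>0"
    using assms(4) by blast
  have "Inl u = sub_vertex e\<^sub>0 0 \<or> Inl u = sub_vertex e\<^sub>0 (L e\<^sub>0)"
    using u(2) mem_edge_iff[OF assms(2)] sub_vertex_L[OF assms(2)] by auto
  then have u_path: "Inl u \<in> sub_vertex e\<^sub>0 ` {..L e\<^sub>0}"
    using image_eqI[of "Inl u" "sub_vertex e\<^sub>0" 0 "{..L e\<^sub>0}"]
      image_eqI[of "Inl u" "sub_vertex e\<^sub>0" "L e\<^sub>0" "{..L e\<^sub>0}"] by auto
  have interior_path: "zone_interior Z s e\<^sub>0 \<subseteq> sub_vertex e\<^sub>0 ` {..L e\<^sub>0}"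
    unfolding zone_interior_def by auto
  have "{x \<in> verts subdiv. zone_potential Z s x \<le> s} - sub_vertex e\<^sub>0 ` {..L e\<^sub>0}
      \<subseteq> Inl ` (Z - {u}) \<union> (\<Union>e\<in>?E - {e\<^sub>0}. zone_interior Z s e)"
  proof
    fix x assume x: "x \<in> {x \<in> verts subdiv. zone_potential Z s x \<le> s} - sub_vertex e\<^sub>0 ` {..L e\<^sub>0}"
    then have "x \<in> Inl ` Z \<union> (\<Union>e\<in>?E. zone_interior Z s e)"
      using zone_sublevel_subset[OF assms(1)] by blast
    moreover have "x \<noteq> Inl u" "x \<notin> zone_interior Z s e\<^sub>0"
      using x u_path interior_path by auto
    ultimately show "x \<in> Inl ` (Z - {u}) \<union> (\<Union>e\<in>?E - {e\<^sub>0}. zone_interior Z s e)"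
      by blast
  qed
  then have "card ({x \<in> verts subdiv. zone_potential Z s x \<le> s} - sub_vertex e\<^sub>0 ` {..L e\<^sub>0})
      \<le> card (Inl ` (Z - {u}) \<union> (\<Union>e\<in>?E - {e\<^sub>0}. zone_interior Z s e))"
    using fin by (intro card_mono) (auto simp: zone_interior_def)
  also have "\<dots> \<le> card (Inl ` (Z - {u}) :: ('v + nat) set) + card (\<Union>e\<in>?E - {e\<^sub>0}. zone_interior Z s e)"
    by (rule card_Un_le)
  also have "\<dots> \<le> card (Z - {u}) + (\<Sum>e\<in>?E - {e\<^sub>0}. card (zone_interior Z s e))"
    using fin by (intro add_mono card_image_le card_UN_le) simp_all
  also have "\<dots> \<le> card (Z - {u}) + (\<Sum>e\<in>?E - {e\<^sub>0}. min (L e - 1) s)"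
    using card_zone_interior[OF assms(1)] by (intro add_left_mono sum_mono) auto
  also have "\<dots> + s + 1 = zone_count Z s"
  proof -
    have "card (Z - {u}) + 1 = card Z"
      using fin(2) u(1) card_Suc_Diff1 by fastforce
    moreover have "(\<Sum>e\<in>?E - {e\<^sub>0}. min (L e - 1) s) + s = (\<Sum>e\<in>?E. min (L e - 1) s)"
      using sum.remove[OF fin(1), of e\<^sub>0 "\<lambda>e. min (L e - 1) s"] assms(2-4) by auto
    ultimately show ?thesis
      unfolding zone_count_def by linarith
  qed
  finally show ?thesis
    by linarith
qed

end

context edge_subdivision
begin

text \<open>For a centre on edge \<open>e\<^sub>0\<close> at distance \<open>p\<close> from \<open>tail e\<^sub>0\<close> and \<open>q\<close> from \<open>head e\<^sub>0\<close>: the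
  distance along \<open>e\<^sub>0\<close>, or the distance through an end of \<open>e\<^sub>0\<close> measured by the potentials
  \<open>Fu\<close>, \<open>Fv\<close> of zones around the ends, capped at \<open>r + 1\<close>.\<close>

definition along_edge :: "'v set \<Rightarrow> nat \<Rightarrow> nat \<Rightarrow> 'v + nat \<Rightarrow> nat" where
  "along_edge e\<^sub>0 p r = glue (\<lambda>_. Suc r) (\<lambda>e j. if e = e\<^sub>0 then max (j - p) (p - j) else Suc r)"

definition through_ends :: "nat \<Rightarrow> nat \<Rightarrow> nat \<Rightarrow> ('v + nat \<Rightarrow> nat) \<Rightarrow> ('v + nat \<Rightarrow> nat) \<Rightarrow> 'v + nat \<Rightarrow> nat"
  where "through_ends p q r Fu Fv x = min (Suc r) (min (p + Fu x) (q + Fv x))"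

definition edge_centre_potential ::
    "'v set \<Rightarrow> nat \<Rightarrow> nat \<Rightarrow> ('v + nat \<Rightarrow> nat) \<Rightarrow> ('v + nat \<Rightarrow> nat) \<Rightarrow> 'v + nat \<Rightarrow> nat" where
  "edge_centre_potential e\<^sub>0 p r Fu Fv x =
     min (along_edge e\<^sub>0 p r x) (through_ends p (L e\<^sub>0 - p) r Fu Fv x)"

lemma lipschitz_through_ends:
  "lipschitz_graph subdiv Fu \<Longrightarrow> lipschitz_graph subdiv Fv \<Longrightarrow> lipschitz_graph subdiv (through_ends p q r Fu Fv)"
  unfolding through_ends_def
  by (intro lipschitz_graph_min lipschitz_graph_const lipschitz_graph_add_const)

lemma edge_centre_potential_off_edge:
  assumes "x \<in> verts subdiv" "x \<notin> sub_vertex e\<^sub>0 ` {0<..<L e\<^sub>0}"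
  shows "edge_centre_potential e\<^sub>0 p r Fu Fv x = through_ends p (L e\<^sub>0 - p) r Fu Fv x"
proof -
  have "along_edge e\<^sub>0 p r x = Suc r"
    using assms(1)
  proof (cases rule: verts_subdivE)
    case (2 e j)
    then have "e \<noteq> e\<^sub>0"
      using assms(2) by auto
    then show ?thesis
      using 2 by (simp add: along_edge_def glue_interior)
  qed (simp add: along_edge_def)
  then show ?thesis
    unfolding edge_centre_potential_def through_ends_def by simp
qed

lemma edge_centre_potential_on_edge:
  assumes "e\<^sub>0 \<in> edges G" "p \<le> L e\<^sub>0" "j \<le> L e\<^sub>0"
    and "Fu (Inl (tail e\<^sub>0)) = 0" "Fv (Inl (head e\<^sub>0)) = 0"
  shows "edge_centre_potential e\<^sub>0 p r Fu Fv (sub_vertex e\<^sub>0 j) =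
    min (max (j - p) (p - j)) (through_ends p (L e\<^sub>0 - p) r Fu Fv (sub_vertex e\<^sub>0 j))"
proof -
  consider "j = 0" | "j = L e\<^sub>0" | "0 < j" "j < L e\<^sub>0"
    using assms(3) by linarith
  then show ?thesis
  proof cases
    case 1
    then show ?thesis
      using assms(4) by (simp add: edge_centre_potential_def along_edge_def through_ends_def)
  next
    case 2
    then show ?thesis
      using assms(1,2,5) by (simp add: edge_centre_potential_def along_edge_def through_ends_def)
  next
    case 3
    then show ?thesis
      using assms(1) by (simp add: edge_centre_potential_def along_edge_def glue_interior)
  qed
qed

lemma lipschitz_edge_centre_potential:
  assumes "e\<^sub>0 \<in> edges G" "p \<le> L e\<^sub>0"
    and "lipschitz_graph subdiv Fu" "lipschitz_graph subdiv Fv"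
    and "Fu (Inl (tail e\<^sub>0)) = 0" "Fv (Inl (head e\<^sub>0)) = 0"
  shows "lipschitz_graph subdiv (edge_centre_potential e\<^sub>0 p r Fu Fv)"
  unfolding lipschitz_graph_subdiv_iff
proof (intro ballI allI impI)
  fix e j assume e: "e \<in> edges G" and j: "j < L e"
  let ?X = "edge_centre_potential e\<^sub>0 p r Fu Fv" and ?T = "through_ends p (L e\<^sub>0 - p) r Fu Fv"
  have T: "?T (sub_vertex e (Suc j)) \<le> ?T (sub_vertex e j) + 1 \<and> ?T (sub_vertex e j) \<le> ?T (sub_vertex e (Suc j)) + 1"
    using lipschitz_through_ends[OF assms(3,4)] e j unfolding lipschitz_graph_subdiv_iff by blast
  show "?X (sub_vertex e (Suc j)) \<le> ?X (sub_vertex e j) + 1 \<and> ?X (sub_vertex e j) \<le> ?X (sub_vertex e (Suc j)) + 1"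
  proof (cases "e = e\<^sub>0")
    case True
    have "?X (sub_vertex e\<^sub>0 i) = min (max (i - p) (p - i)) (?T (sub_vertex e\<^sub>0 i))" if "i \<le> L e\<^sub>0" for i
      using edge_centre_potential_on_edge[where Fu = Fu and Fv = Fv and r = r] assms that by blast
    then have X: "?X (sub_vertex e (Suc j)) = min (max (Suc j - p) (p - Suc j)) (?T (sub_vertex e (Suc j)))"
      "?X (sub_vertex e j) = min (max (j - p) (p - j)) (?T (sub_vertex e j))"
      using j True by simp_all
    have D: "max (Suc j - p) (p - Suc j) \<le> max (j - p) (p - j) + 1"
      "max (j - p) (p - j) \<le> max (Suc j - p) (p - Suc j) + 1"
      by (auto simp: max_def)
    have min_step: "a' \<le> a + 1 \<Longrightarrow> b' \<le> b + 1 \<Longrightarrow> min a' b' \<le> min a b + 1" for a a' b b' :: nat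
      by (simp add: min_def)
    show ?thesis
      unfolding X using min_step[OF D(1) T[THEN conjunct1]] min_step[OF D(2) T[THEN conjunct2]] by simp
  next
    case False
    have "sub_vertex e i \<notin> sub_vertex e\<^sub>0 ` {0<..<L e\<^sub>0}" if i: "i \<le> L e" for i
    proof
      assume "sub_vertex e i \<in> sub_vertex e\<^sub>0 ` {0<..<L e\<^sub>0}"
      then obtain i' where "0 < i'" "i' < L e\<^sub>0" "sub_vertex e\<^sub>0 i' = sub_vertex e i"
        by auto
      moreover have "e\<^sub>0 \<noteq> e"
        using False by simp
      ultimately show False
        using sub_vertex_interior_neq[OF assms(1) e] i by blast
    qed
    then show ?thesis
      using T j e sub_vertex_in_subdiv edge_centre_potential_off_edge by simp
  qed
qed

end

context edge_subdivision
begin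

lemma edge_centre_sublevel_subset:
  assumes e\<^sub>0: "e\<^sub>0 \<in> edges G" and "p \<le> L e\<^sub>0" "r < L e\<^sub>0"
    and Zu: "zone Zu (r - p)" "tail e\<^sub>0 \<in> Zu" and Zv: "zone Zv (r - (L e\<^sub>0 - p))" "head e\<^sub>0 \<in> Zv"
  defines "Fu \<equiv> zone_potential Zu (r - p)" and "Fv \<equiv> zone_potential Zv (r - (L e\<^sub>0 - p))"
  shows "{x \<in> verts subdiv. edge_centre_potential e\<^sub>0 p r Fu Fv x \<le> r} \<subseteq>
      sub_vertex e\<^sub>0 ` {j. j \<le> L e\<^sub>0 \<and> j \<le> p + r \<and> p \<le> j + r}
      \<union> (if p \<le> r then {x \<in> verts subdiv. Fu x \<le> r - p} - sub_vertex e\<^sub>0 ` {..L e\<^sub>0} else {})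
      \<union> (if L e\<^sub>0 - p \<le> r then {x \<in> verts subdiv. Fv x \<le> r - (L e\<^sub>0 - p)} - sub_vertex e\<^sub>0 ` {..L e\<^sub>0}
         else {})"
    (is "_ \<subseteq> ?A \<union> ?Bu \<union> ?Bv")
proof
  let ?q = "L e\<^sub>0 - p" and ?T = "through_ends p (L e\<^sub>0 - p) r Fu Fv"
  fix x assume "x \<in> {x \<in> verts subdiv. edge_centre_potential e\<^sub>0 p r Fu Fv x \<le> r}"
  then have x: "x \<in> verts subdiv" "edge_centre_potential e\<^sub>0 p r Fu Fv x \<le> r"
    by auto
  have ends: "Fu (Inl (tail e\<^sub>0)) = 0" "Fv (Inl (head e\<^sub>0)) = 0"
    using Zu(2) Zv(2) by (simp_all add: Fu_def Fv_def)
  show "x \<in> ?A \<union> ?Bu \<union> ?Bv"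
  proof (cases "x \<in> sub_vertex e\<^sub>0 ` {..L e\<^sub>0}")
    case True
    then obtain j where j: "j \<le> L e\<^sub>0" "x = sub_vertex e\<^sub>0 j"
      by auto
    have long: "\<not> L e\<^sub>0 \<le> r - p" "\<not> L e\<^sub>0 \<le> r - ?q"
      using assms(3) by linarith+
    have "Fu x = min j (Suc (r - p))"
      using zone_potential_sub_vertex[OF Zu(1) e\<^sub>0 j(1)] Zu(2) long j(2)
      by (simp add: Fu_def zone_profile_def)
    moreover have "tail e\<^sub>0 \<notin> Zv"
      using zone_long_edge[OF Zv(1) e\<^sub>0] Zv(2) long by auto
    then have "Fv x = min (L e\<^sub>0 - j) (Suc (r - ?q))"
      using zone_potential_sub_vertex[OF Zv(1) e\<^sub>0 j(1)] Zv(2) long j(2)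
      by (simp add: Fv_def zone_profile_def)
    moreover have "min (max (j - p) (p - j)) (?T x) \<le> r"
      using x(2) edge_centre_potential_on_edge[where Fu = Fu and Fv = Fv and r = r, OF e\<^sub>0 assms(2) j(1) ends] j(2)
      by simp
    ultimately have "max (j - p) (p - j) \<le> r \<or> p + min j (Suc (r - p)) \<le> r
        \<or> ?q + min (L e\<^sub>0 - j) (Suc (r - ?q)) \<le> r"
      unfolding through_ends_def min_le_iff_disj by simp
    then have "j \<le> p + r \<and> p \<le> j + r"
    proof (elim disjE)
      assume "p + min j (Suc (r - p)) \<le> r"
      then have "min j (Suc (r - p)) \<le> r - p" "p \<le> r"
        by linarith+
      then show ?thesis
        by (simp add: min_def split: if_splits)
    next
      assume "?q + min (L e\<^sub>0 - j) (Suc (r - ?q)) \<le> r"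
      then have "min (L e\<^sub>0 - j) (Suc (r - ?q)) \<le> r - ?q" "?q \<le> r"
        by linarith+
      then have "L e\<^sub>0 - j \<le> r - ?q"
        by (simp add: min_def split: if_splits)
      then show ?thesis
        using j(1) assms(2) \<open>?q \<le> r\<close> by linarith
    qed linarith
    then show ?thesis
      using j by blast
  next
    case False
    then have "x \<notin> sub_vertex e\<^sub>0 ` {0<..<L e\<^sub>0}"
      by auto
    then have "?T x \<le> r"
      using x(2) edge_centre_potential_off_edge[OF x(1)] by metis
    then have "p \<le> r \<and> Fu x \<le> r - p \<or> ?q \<le> r \<and> Fv x \<le> r - ?q"
      unfolding through_ends_def by linarith
    then show ?thesis
      using False x(1) by auto
  qed
qed

lemma card_edge_centre_sublevel:
  assumes e\<^sub>0: "e\<^sub>0 \<in> edges G" and "p \<le> L e\<^sub>0" "r < L e\<^sub>0"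
    and Zu: "zone Zu (r - p)" "tail e\<^sub>0 \<in> Zu" and Zv: "zone Zv (r - (L e\<^sub>0 - p))" "head e\<^sub>0 \<in> Zv"
  defines "q \<equiv> L e\<^sub>0 - p"
  defines "X \<equiv> edge_centre_potential e\<^sub>0 p r (zone_potential Zu (r - p)) (zone_potential Zv (r - q))"
  shows "card {x \<in> verts subdiv. X x \<le> r} + (if p \<le> r then r - p + 1 else 0) + (if q \<le> r then r - q + 1 else 0)
    \<le> min p r + min q r + 1 + (if p \<le> r then zone_count Zu (r - p) else 0)
      + (if q \<le> r then zone_count Zv (r - q) else 0)"
proof -
  let ?J = "{j. j \<le> L e\<^sub>0 \<and> j \<le> p + r \<and> p \<le> j + r}"
  let ?Bu = "if p \<le> r then {x \<in> verts subdiv. zone_potential Zu (r - p) x \<le> r - p} - sub_vertex e\<^sub>0 ` {..L e\<^sub>0} else {}"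
  let ?Bv = "if q \<le> r then {x \<in> verts subdiv. zone_potential Zv (r - q) x \<le> r - q} - sub_vertex e\<^sub>0 ` {..L e\<^sub>0} else {}"
  have "card {x \<in> verts subdiv. X x \<le> r} \<le> card (sub_vertex e\<^sub>0 ` ?J \<union> ?Bu \<union> ?Bv)"
    using edge_centre_sublevel_subset[OF assms(1-7)] finite_subdiv unfolding X_def q_def
    by (intro card_mono) auto
  also have "\<dots> \<le> card (sub_vertex e\<^sub>0 ` ?J) + card ?Bu + card ?Bv"
    by (meson card_Un_le add_right_mono order_trans)
  finally have X: "card {x \<in> verts subdiv. X x \<le> r} \<le> card (sub_vertex e\<^sub>0 ` ?J) + card ?Bu + card ?Bv" .
  have "?J = {p - r..min (L e\<^sub>0) (p + r)}"
    by auto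
  then have "card ?J \<le> min p r + min q r + 1"
    using assms(2) unfolding q_def by (simp add: min_def; arith)
  then have A: "card (sub_vertex e\<^sub>0 ` ?J) \<le> min p r + min q r + 1"
    using card_image_le[of ?J "sub_vertex e\<^sub>0"] by simp
  have "r - p < L e\<^sub>0" "r - q < L e\<^sub>0" "e\<^sub>0 \<inter> Zu \<noteq> {}" "e\<^sub>0 \<inter> Zv \<noteq> {}"
    using assms(3) Zu(2) Zv(2) mem_edge_iff[OF e\<^sub>0] by auto
  then have "card ?Bu + (if p \<le> r then r - p + 1 else 0) \<le> (if p \<le> r then zone_count Zu (r - p) else 0)"
    and "card ?Bv + (if q \<le> r then r - q + 1 else 0) \<le> (if q \<le> r then zone_count Zv (r - q) else 0)"
    using card_zone_sublevel_off_path[OF Zu(1) e\<^sub>0] card_zone_sublevel_off_path[OF Zv(1)[folded q_def] e\<^sub>0]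
    by auto
  then show ?thesis
    using X A by linarith
qed

end

text \<open>The bookkeeping for a centre inside an edge: the two ends contribute at most \<open>r\<close> in total
  to \<open>min p r + min q r\<close>, so with \<open>\<beta> \<ge> 2\<close> the zones around them cost no more than a zone around
  the centre would.\<close>

lemma two_zone_count_le:
  fixes p q r c cu cv :: nat and \<beta> :: real
  assumes "2 \<le> \<beta>" "r < p + q"
    and "real cu \<le> \<beta> * real (r - p) + 1" "real cv \<le> \<beta> * real (r - q) + 1"
    and "c + (if p \<le> r then r - p + 1 else 0) + (if q \<le> r then r - q + 1 else 0)
      \<le> min p r + min q r + 1 + (if p \<le> r then cu else 0) + (if q \<le> r then cv else 0)"
  shows "real c \<le> \<beta> * real r + 1"
proof -
  define u where "u = real (r - min p r)"
  define v where "v = real (r - min q r)"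
  have "real c \<le> 2 * real r + 1 + (\<beta> - 2) * (u + v)"
    using assms(3-5) unfolding u_def v_def
    by (cases "p \<le> r"; cases "q \<le> r") (simp_all add: algebra_simps of_nat_diff)
  moreover have "(\<beta> - 2) * (u + v) \<le> (\<beta> - 2) * real r"
    using assms(1,2) unfolding u_def v_def by (intro mult_left_mono) (simp_all add: min_def)
  ultimately show ?thesis
    by (simp add: algebra_simps)
qed

context edge_subdivision
begin

lemma centre_potential_exists:
  assumes "2 \<le> \<beta>"
    and zones: "\<And>u s. u \<in> verts G \<Longrightarrow> \<exists>Z. zone Z s \<and> u \<in> Z \<and> real (zone_count Z s) \<le> \<beta> * real s + 1"
    and "c \<in> verts subdiv"
  shows "\<exists>F. lipschitz_graph subdiv F \<and> F c = 0 \<and> real (card {x \<in> verts subdiv. F x \<le> r}) \<le> \<beta> * real r + 1"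
  using assms(3)
proof (cases rule: verts_subdivE)
  case (1 w)
  obtain Z where Z: "zone Z r" "w \<in> Z" "real (zone_count Z r) \<le> \<beta> * real r + 1"
    using zones 1(1) by blast
  then show ?thesis
    using 1(2) lipschitz_zone_potential card_zone_sublevel[OF Z(1)]
    by (intro exI[of _ "zone_potential Z r"]) (auto intro: order_trans[rotated])
next
  case (2 e\<^sub>0 p)
  show ?thesis
  proof (cases "L e\<^sub>0 \<le> r")
    case True
    obtain Z where Z: "zone Z r" "tail e\<^sub>0 \<in> Z" "real (zone_count Z r) \<le> \<beta> * real r + 1"
      using zones tail_head(3)[OF 2(1)] by blast
    have "zone_potential Z r c = 0"
      using zone_potential_sub_vertex[OF Z(1) 2(1)] 2 True Z(2) by (simp add: zone_profile_def)
    then show ?thesis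
      using lipschitz_zone_potential[OF Z(1)] card_zone_sublevel[OF Z(1)] Z(3)
      by (intro exI[of _ "zone_potential Z r"]) (auto intro: order_trans[rotated])
  next
    case False
    define q where "q = L e\<^sub>0 - p"
    obtain Zu where Zu: "zone Zu (r - p)" "tail e\<^sub>0 \<in> Zu" "real (zone_count Zu (r - p)) \<le> \<beta> * real (r - p) + 1"
      using zones tail_head(3)[OF 2(1)] by blast
    obtain Zv where Zv: "zone Zv (r - q)" "head e\<^sub>0 \<in> Zv" "real (zone_count Zv (r - q)) \<le> \<beta> * real (r - q) + 1"
      using zones tail_head(4)[OF 2(1)] by blast
    define F where "F = edge_centre_potential e\<^sub>0 p r (zone_potential Zu (r - p)) (zone_potential Zv (r - q))"
    have "lipschitz_graph subdiv F"
      unfolding F_def using 2 Zu(2) Zv(2)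
      by (intro lipschitz_edge_centre_potential lipschitz_zone_potential Zu(1) Zv(1)) simp_all
    moreover have "F c = 0"
      unfolding F_def 2(4)
      using edge_centre_potential_on_edge[OF 2(1), of p p "zone_potential Zu (r - p)" "zone_potential Zv (r - q)"]
        2 Zu(2) Zv(2) by simp
    moreover have card: "card {x \<in> verts subdiv. F x \<le> r} + (if p \<le> r then r - p + 1 else 0)
        + (if q \<le> r then r - q + 1 else 0) \<le> min p r + min q r + 1
        + (if p \<le> r then zone_count Zu (r - p) else 0) + (if q \<le> r then zone_count Zv (r - q) else 0)"
      using card_edge_centre_sublevel[OF 2(1) _ _ Zu(1,2) Zv(1,2)[unfolded q_def]] 2 False
      unfolding F_def q_def by simp
    moreover have "r < p + q"
      using 2 False unfolding q_def by simp
    then have "real (card {x \<in> verts subdiv. F x \<le> r}) \<le> \<beta> * real r + 1"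
      by (rule two_zone_count_le[OF assms(1) _ Zu(3) Zv(3) card])
    ultimately show ?thesis
      by blast
  qed
qed

theorem growth_subdiv_le:
  assumes "2 \<le> \<beta>"
    and "\<And>u s. u \<in> verts G \<Longrightarrow> \<exists>Z. zone Z s \<and> u \<in> Z \<and> real (zone_count Z s) \<le> \<beta> * real s + 1"
  shows "real (growth subdiv r) \<le> \<beta> * real r + 1"
proof -
  have "growth subdiv r \<le> nat \<lfloor>\<beta> * real r + 1\<rfloor>"
    using finite_subdiv
  proof (rule growth_le_if_lipschitz_sublevels)
    fix c assume "c \<in> verts subdiv"
    then show "\<exists>F. lipschitz_graph subdiv F \<and> F c = 0 \<and> card {x \<in> verts subdiv. F x \<le> r} \<le> nat \<lfloor>\<beta> * real r + 1\<rfloor>"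
      using centre_potential_exists[OF assms] le_nat_floor by blast
  qed
  then have "real (growth subdiv r) \<le> real (nat \<lfloor>\<beta> * real r + 1\<rfloor>)"
    by simp
  also have "\<dots> \<le> \<beta> * real r + 1"
    using assms(1) by (intro of_nat_floor) simp
  finally show ?thesis .
qed

end

locale ranked_tree =
  fixes T :: "'a ugraph" and r\<^sub>0 :: 'a and key :: "'a \<Rightarrow> nat"
  assumes tree: "tree T" and ranking: "rooted_ranking T r\<^sub>0 key"
begin

lemma finite_verts_T: "finite (verts T)"
  using tree unfolding tree_def ugraph_def by blast

lemma key_inj: "a \<in> verts T \<Longrightarrow> b \<in> verts T \<Longrightarrow> key a = key b \<Longrightarrow> a = b"
  using ranking unfolding rooted_ranking_def by (meson inj_onD)

text \<open>Removing the vertices of key below \<open>\<kappa>\<close> leaves a subtree; the hub of a vertex of key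
  at most \<open>\<kappa>\<close> is the vertex of that subtree where its component hangs (or itself if its key is \<open>\<kappa>\<close>).\<close>

definition hub :: "nat \<Rightarrow> 'a \<Rightarrow> 'a" where
  "hub \<kappa> a = (if key a = \<kappa> then a else attachment T {b. key b < \<kappa>} a)"

lemma hub_exit:
  assumes "a \<in> verts T" "b \<in> verts T" "{a, b} \<in> edges T" "key a < \<kappa>" "\<kappa> \<le> key b"
  shows "hub \<kappa> a = b"
  using attachment_eqI[OF tree rooted_ranking_connected_above[OF finite_verts_T ranking]] assms
  by (simp add: hub_def)

lemma hub_adjacent:
  assumes "a \<in> verts T" "b \<in> verts T" "{a, b} \<in> edges T" "key a \<le> \<kappa>" "key b \<le> \<kappa>"
  shows "hub \<kappa> a = hub \<kappa> b"
proof -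
  have ba: "{b, a} \<in> edges T"
    using assms(3) by (simp add: insert_commute)
  consider "key a < \<kappa>" "key b < \<kappa>" | "key a < \<kappa>" "key b = \<kappa>" | "key a = \<kappa>" "key b < \<kappa>"
    | "key a = \<kappa>" "key b = \<kappa>"
    using assms(4,5) by linarith
  then show ?thesis
  proof cases
    case 1
    then show ?thesis
      using attachment_adjacent[of a "{b. key b < \<kappa>}" b T] assms by (simp add: hub_def)
  next
    case 2
    then show ?thesis
      using hub_exit[OF assms(1-3)] by (simp add: hub_def)
  next
    case 3
    then show ?thesis
      using hub_exit[OF assms(2,1) ba] by (simp add: hub_def)
  next
    case 4
    then show ?thesis
      using key_inj[OF assms(1,2)] by simp
  qed
qed

end

locale tree_subdivision = ranked_tree T r\<^sub>0 key
  for T :: "'a ugraph" and r\<^sub>0 key +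
  fixes k \<Delta> :: nat and G :: "('a \<times> nat) ugraph" and M :: nat and \<epsilon> :: real
  assumes subgraph_G: "subgraph G (strong_product T (complete_graph k))"
    and degree_G: "max_degree_le G \<Delta>"
    and M_ge_2: "2 \<le> M"
    and M_large: "2 * real (card (verts G) + card (edges G)) \<le> \<epsilon> * real M"
begin

text \<open>An edge of \<open>G\<close> is subdivided into a path whose length grows geometrically with the largest key
  of the tree vertices under its ends.\<close>

definition level :: "('a \<times> nat) set \<Rightarrow> nat" where
  "level e = Max ((key \<circ> fst) ` e)"

sublocale edge_subdivision G "\<lambda>e. M ^ Suc (level e)"
  using subgraph_G M_ge_2 by unfold_locales (auto simp: subgraph_def)

lemma verts_G_fst: "x \<in> verts G \<Longrightarrow> fst x \<in> verts T \<and> snd x < k"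
  using subgraph_G unfolding subgraph_def strong_product_def complete_graph_def verts_def by auto

lemma edges_G_fst:
  assumes "e \<in> edges G"
  shows "fst (tail e) = fst (head e) \<or> {fst (tail e), fst (head e)} \<in> edges T"
proof -
  have "e \<in> edges (strong_product T (complete_graph k))"
    using subgraph_G assms unfolding subgraph_def by blast
  then obtain v w v' w' where vw: "e = {(v, w), (v', w')}" "v = v' \<or> {v, v'} \<in> edges T"
    unfolding strong_product_def edges_def by auto
  then have "tail e = (v, w) \<and> head e = (v', w') \<or> tail e = (v', w') \<and> head e = (v, w)"
    using tail_head(1)[OF assms] by (auto simp: doubleton_eq_iff)
  then show ?thesis
    using vw(2) by (auto simp: insert_commute)
qed

lemma level_edge: "e \<in> edges G \<Longrightarrow> level e = max (key (fst (tail e))) (key (fst (head e)))"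
  unfolding level_def by (subst tail_head(1)) (auto simp: max_def)

definition hub_zone :: "nat \<Rightarrow> 'a \<Rightarrow> ('a \<times> nat) set" where
  "hub_zone \<kappa> \<zeta> = {x \<in> verts G. key (fst x) \<le> \<kappa> \<and> hub \<kappa> (fst x) = \<zeta>}"

lemma hub_zone_short_edge:
  assumes "e \<in> edges G" "level e \<le> \<kappa>"
  shows "tail e \<in> hub_zone \<kappa> \<zeta> \<longleftrightarrow> head e \<in> hub_zone \<kappa> \<zeta>"
proof -
  have "key (fst (tail e)) \<le> \<kappa>" "key (fst (head e)) \<le> \<kappa>"
    using assms level_edge by auto
  moreover have "hub \<kappa> (fst (tail e)) = hub \<kappa> (fst (head e))"
    using edges_G_fst[OF assms(1)] hub_adjacent calculation verts_G_fst tail_head(3,4)[OF assms(1)]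
    by metis
  ultimately show ?thesis
    unfolding hub_zone_def using tail_head(3,4)[OF assms(1)] by auto
qed

lemma hub_zone_long_step:
  assumes "x \<in> verts G" "y \<in> verts G" "fst x = fst y \<or> {fst x, fst y} \<in> edges T"
    and "\<kappa> \<le> max (key (fst x)) (key (fst y))" "x \<in> hub_zone \<kappa> \<zeta>"
  shows "fst x = \<zeta> \<or> fst y = \<zeta>"
proof (cases "key (fst x) = \<kappa>")
  case True
  then show ?thesis
    using assms(5) unfolding hub_zone_def hub_def by auto
next
  case False
  then have "key (fst x) < \<kappa>" "\<kappa> \<le> key (fst y)"
    using assms(4,5) unfolding hub_zone_def by auto
  then have "hub \<kappa> (fst x) = fst y"
    using hub_exit assms(1-3) verts_G_fst by (metis not_le)
  then show ?thesis
    using assms(5) unfolding hub_zone_def by auto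
qed

lemma hub_zone_long_edge:
  assumes "e \<in> edges G" "e \<inter> hub_zone \<kappa> \<zeta> \<noteq> {}" "\<kappa> \<le> level e"
  shows "\<exists>z\<in>e. fst z = \<zeta>"
proof -
  obtain x where "x \<in> e" "x \<in> hub_zone \<kappa> \<zeta>"
    using assms(2) by blast
  then have "tail e \<in> hub_zone \<kappa> \<zeta> \<or> head e \<in> hub_zone \<kappa> \<zeta>"
    using mem_edge_iff[OF assms(1)] by auto
  moreover have "{fst (head e), fst (tail e)} \<in> edges T \<longleftrightarrow> {fst (tail e), fst (head e)} \<in> edges T"
    by (simp add: insert_commute)
  ultimately have "fst (tail e) = \<zeta> \<or> fst (head e) = \<zeta>"
    using hub_zone_long_step[of "tail e" "head e"] hub_zone_long_step[of "head e" "tail e"]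
      tail_head(3,4)[OF assms(1)] edges_G_fst[OF assms(1)] assms(3) level_edge[OF assms(1)]
    by (metis max.commute)
  then show ?thesis
    using mem_edge_iff[OF assms(1)] by blast
qed

lemma card_edges_over_vertex: "card {e \<in> edges G. \<exists>z\<in>e. fst z = \<zeta>} \<le> k * \<Delta>"
proof -
  define bag where "bag = {x \<in> verts G. fst x = \<zeta>}"
  have "bag \<subseteq> (\<lambda>i. (\<zeta>, i)) ` {..<k}"
    unfolding bag_def using verts_G_fst by force
  then have "card bag \<le> card ((\<lambda>i. (\<zeta>, i)) ` {..<k})"
    by (intro card_mono) auto
  also have "\<dots> \<le> k"
    using card_image_le[of "{..<k}" "\<lambda>i. (\<zeta>, i)"] by simp
  finally have "card bag \<le> k" .
  have "{e \<in> edges G. \<exists>z\<in>e. fst z = \<zeta>} \<subseteq> (\<Union>z\<in>bag. {e \<in> edges G. z \<in> e})"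
  proof
    fix e assume "e \<in> {e \<in> edges G. \<exists>z\<in>e. fst z = \<zeta>}"
    then obtain z where z: "e \<in> edges G" "z \<in> e" "fst z = \<zeta>"
      by blast
    then have "z \<in> verts G"
      using mem_edge_iff[OF z(1)] tail_head(3,4)[OF z(1)] by auto
    then show "e \<in> (\<Union>z\<in>bag. {e \<in> edges G. z \<in> e})"
      unfolding bag_def using z by blast
  qed
  then have "card {e \<in> edges G. \<exists>z\<in>e. fst z = \<zeta>} \<le> card (\<Union>z\<in>bag. {e \<in> edges G. z \<in> e})"
    using finite_edges by (intro card_mono) (auto intro: finite_subset[OF _ finite_edges])
  also have "\<dots> \<le> (\<Sum>z\<in>bag. card {e \<in> edges G. z \<in> e})"
    using finite_verts unfolding bag_def by (intro card_UN_le) simp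
  also have "\<dots> \<le> card bag * \<Delta>"
    using degree_G sum_bounded_above[of bag "\<lambda>z. card {e \<in> edges G. z \<in> e}" \<Delta>]
    unfolding max_degree_le_def bag_def by auto
  also have "\<dots> \<le> k * \<Delta>"
    using \<open>card bag \<le> k\<close> by simp
  finally show ?thesis .
qed

end

context tree_subdivision
begin

lemma star_zone:
  assumes "u \<in> verts G" and long: "\<And>e. e \<in> edges G \<Longrightarrow> u \<in> e \<Longrightarrow> s < M ^ Suc (level e)"
  shows "zone {u} s" "zone_count {u} s \<le> 1 + \<Delta> * s"
proof -
  show "zone {u} s"
    unfolding zone_def
  proof (intro conjI ballI)
    fix e assume e: "e \<in> edges G"
    show "if M ^ Suc (level e) \<le> s then e \<subseteq> {u} \<or> e \<inter> {u} = {} else \<not> e \<subseteq> {u}"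
      using long[OF e] tail_head(1,2)[OF e] by (auto simp: not_le)
  qed (use assms(1) in simp)
  have "(\<Sum>e\<in>{e \<in> edges G. e \<inter> {u} \<noteq> {}}. min (M ^ Suc (level e) - 1) s)
      \<le> card {e \<in> edges G. u \<in> e} * s"
    using sum_bounded_above[of "{e \<in> edges G. u \<in> e}" "\<lambda>e. min (M ^ Suc (level e) - 1) s" s] by simp
  also have "\<dots> \<le> \<Delta> * s"
    using degree_G assms(1) unfolding max_degree_le_def by simp
  finally show "zone_count {u} s \<le> 1 + \<Delta> * s"
    unfolding zone_count_def by simp
qed

lemma level_eq_key:
  assumes "e \<in> edges G"
  obtains a where "a \<in> verts T" "level e = key a" "\<exists>z\<in>e. fst z = a"
  using level_edge[OF assms] verts_G_fst tail_head(3,4)[OF assms] mem_edge_iff[OF assms]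
  by (metis max_def)

lemma level_threshold:
  assumes "e\<^sub>0 \<in> edges G" "M ^ Suc (level e\<^sub>0) \<le> s"
  obtains \<kappa> where "level e\<^sub>0 \<le> \<kappa>" "M ^ Suc \<kappa> \<le> s"
    "\<And>e. e \<in> edges G \<Longrightarrow> M ^ Suc (level e) \<le> s \<longleftrightarrow> level e \<le> \<kappa>"
proof -
  define A where "A = {a \<in> verts T. M ^ Suc (key a) \<le> s}"
  have "finite A"
    using finite_verts_T by (simp add: A_def)
  obtain a\<^sub>0 where "a\<^sub>0 \<in> verts T" "level e\<^sub>0 = key a\<^sub>0"
    using level_eq_key[OF assms(1)] by blast
  then have "a\<^sub>0 \<in> A"
    using assms(2) by (simp add: A_def)
  define \<kappa> where "\<kappa> = Max (key ` A)"
  have le_\<kappa>: "a \<in> A \<Longrightarrow> key a \<le> \<kappa>" for a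
    using \<open>finite A\<close> by (simp add: \<kappa>_def)
  have "\<kappa> \<in> key ` A"
    unfolding \<kappa>_def using \<open>finite A\<close> \<open>a\<^sub>0 \<in> A\<close> by (intro Max_in) auto
  then obtain \<tau> where "\<tau> \<in> A" "key \<tau> = \<kappa>"
    by blast
  then have "M ^ Suc \<kappa> \<le> s"
    by (simp add: A_def)
  have threshold: "M ^ Suc (level e) \<le> s \<longleftrightarrow> level e \<le> \<kappa>" if e: "e \<in> edges G" for e
  proof
    assume "M ^ Suc (level e) \<le> s"
    moreover obtain a where "a \<in> verts T" "level e = key a"
      using level_eq_key[OF e] by blast
    ultimately show "level e \<le> \<kappa>"
      using le_\<kappa> by (simp add: A_def)
  next
    assume "level e \<le> \<kappa>"
    then have "M ^ Suc (level e) \<le> M ^ Suc \<kappa>"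
      using M_ge_2 by (intro power_increasing) auto
    then show "M ^ Suc (level e) \<le> s"
      using \<open>M ^ Suc \<kappa> \<le> s\<close> by linarith
  qed
  have "level e\<^sub>0 \<le> \<kappa>"
    using le_\<kappa> \<open>a\<^sub>0 \<in> A\<close> \<open>level e\<^sub>0 = key a\<^sub>0\<close> by simp
  then show thesis
    using \<open>M ^ Suc \<kappa> \<le> s\<close> threshold by (rule that)
qed

lemma hub_zone_is_zone:
  assumes "\<And>e. e \<in> edges G \<Longrightarrow> M ^ Suc (level e) \<le> s \<longleftrightarrow> level e \<le> \<kappa>"
  shows "zone (hub_zone \<kappa> \<zeta>) s"
  unfolding zone_def
proof (intro conjI ballI)
  show "hub_zone \<kappa> \<zeta> \<subseteq> verts G"
    unfolding hub_zone_def by blast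
  fix e assume e: "e \<in> edges G"
  show "if M ^ Suc (level e) \<le> s then e \<subseteq> hub_zone \<kappa> \<zeta> \<or> e \<inter> hub_zone \<kappa> \<zeta> = {}
    else \<not> e \<subseteq> hub_zone \<kappa> \<zeta>"
  proof (cases "level e \<le> \<kappa>")
    case True
    then show ?thesis
      using assms[OF e] hub_zone_short_edge[OF e True, of \<zeta>]
      by (simp add: edge_subset_iff[OF e] edge_disjoint_iff[OF e])
  next
    case False
    then have "\<not> (key (fst (tail e)) \<le> \<kappa> \<and> key (fst (head e)) \<le> \<kappa>)"
      using level_edge[OF e] by auto
    then show ?thesis
      using assms[OF e] False unfolding edge_subset_iff[OF e] hub_zone_def by auto
  qed
qed

end

context tree_subdivision
begin

lemma epsilon_nonneg: "0 \<le> \<epsilon>"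
proof -
  have "0 \<le> \<epsilon> * real M"
    using M_large by (rule order_trans[rotated]) simp
  then show ?thesis
    using M_ge_2 by (simp add: zero_le_mult_iff)
qed

text \<open>Edges of level below \<open>\<kappa>\<close> are shorter than \<open>s / M\<close>, so together they contribute at most
  \<open>card (edges G) * s / M\<close>; the at most \<open>k \<Delta>\<close> others contribute at most \<open>s\<close> each.\<close>

lemma zone_count_le_few_long_edges:
  assumes "zone Z s" "M \<le> s"
    and short: "\<And>e. e \<in> edges G \<Longrightarrow> level e < \<kappa> \<Longrightarrow> M * M ^ Suc (level e) \<le> s"
    and few: "card {e \<in> edges G. e \<inter> Z \<noteq> {} \<and> \<kappa> \<le> level e} \<le> k * \<Delta>"
  shows "real (zone_count Z s) \<le> (real (k * \<Delta>) + \<epsilon> / 2) * real s"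
proof -
  define S where "S = {e \<in> edges G. e \<inter> Z \<noteq> {}}"
  let ?c = "\<lambda>e. min (M ^ Suc (level e) - 1) s"
  have fin: "finite S"
    using finite_edges by (simp add: S_def)
  have "M * ?c e \<le> s + (if \<kappa> \<le> level e then M * s else 0)" if e: "e \<in> edges G" for e
  proof (cases "\<kappa> \<le> level e")
    case True
    have "M * ?c e \<le> M * s"
      by (intro mult_le_mono2) simp
    then show ?thesis
      using True by (simp add: trans_le_add2)
  next
    case False
    have "M * ?c e \<le> M * M ^ Suc (level e)"
      by (intro mult_le_mono2) (simp add: min_le_iff_disj)
    then have "M * ?c e \<le> s"
      using False short[OF e] by linarith
    then show ?thesis
      by simp
  qed
  then have "M * (\<Sum>e\<in>S. ?c e) \<le> (\<Sum>e\<in>S. s + (if \<kappa> \<le> level e then M * s else 0))"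
    unfolding sum_distrib_left S_def by (intro sum_mono) auto
  also have "\<dots> = card S * s + card (S \<inter> {e. \<kappa> \<le> level e}) * (M * s)"
    using fin by (simp add: sum.distrib sum.If_cases)
  also have "S \<inter> {e. \<kappa> \<le> level e} = {e \<in> edges G. e \<inter> Z \<noteq> {} \<and> \<kappa> \<le> level e}"
    unfolding S_def by blast
  also have "card S * s + card {e \<in> edges G. e \<inter> Z \<noteq> {} \<and> \<kappa> \<le> level e} * (M * s)
      \<le> card (edges G) * s + k * \<Delta> * (M * s)"
    using few finite_edges unfolding S_def by (intro add_mono mult_right_mono card_mono) auto
  finally have "M * (\<Sum>e\<in>S. ?c e) \<le> card (edges G) * s + M * (k * \<Delta>) * s"
    by (simp add: algebra_simps)
  moreover have "M * card Z \<le> M * card (verts G)"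
    using card_mono[OF finite_verts, of Z] assms(1) unfolding zone_def by simp
  ultimately have "M * zone_count Z s \<le> M * card (verts G) + card (edges G) * s + M * (k * \<Delta>) * s"
    unfolding zone_count_def S_def[symmetric] add_mult_distrib2 by linarith
  then have "real (M * zone_count Z s) \<le> real (M * card (verts G) + card (edges G) * s + M * (k * \<Delta>) * s)"
    by (rule of_nat_mono)
  then have "real M * real (zone_count Z s)
      \<le> real M * real (card (verts G)) + real (card (edges G)) * real s + real M * real (k * \<Delta>) * real s"
    by simp
  moreover have "real M * real (card (verts G)) \<le> real s * real (card (verts G))"
    using assms(2) by (intro mult_right_mono) auto
  moreover have "2 * real (card (verts G) + card (edges G)) * real s \<le> \<epsilon> * real M * real s"
    using M_large by (intro mult_right_mono) auto
  ultimately have "real M * real (zone_count Z s) \<le> real M * ((real (k * \<Delta>) + \<epsilon> / 2) * real s)"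
    by (simp add: algebra_simps)
  then show ?thesis
    using M_ge_2 by simp
qed

lemma exists_zone:
  assumes u: "u \<in> verts G"
  shows "\<exists>Z. zone Z s \<and> u \<in> Z \<and> real (zone_count Z s) \<le> (real (k * \<Delta>) + \<epsilon> / 2) * real s + 1"
proof (cases "\<exists>e\<in>edges G. u \<in> e \<and> M ^ Suc (level e) \<le> s")
  case False
  then have "zone {u} s" "zone_count {u} s \<le> 1 + \<Delta> * s"
    using star_zone[OF u] by (auto simp: not_le)
  moreover have "real \<Delta> \<le> real k * real \<Delta>"
    using verts_G_fst[OF u] by (simp add: mult_le_cancel_right1)
  then have "real \<Delta> * real s \<le> (real (k * \<Delta>) + \<epsilon> / 2) * real s"
    using epsilon_nonneg by (intro mult_right_mono) auto
  ultimately show ?thesis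
    by (intro exI[of _ "{u}"]) (auto simp: add.commute dest: of_nat_mono[where 'a = real])
next
  case True
  then obtain e\<^sub>0 where e\<^sub>0: "e\<^sub>0 \<in> edges G" "u \<in> e\<^sub>0" "M ^ Suc (level e\<^sub>0) \<le> s"
    by blast
  obtain \<kappa> where \<kappa>: "level e\<^sub>0 \<le> \<kappa>" "M ^ Suc \<kappa> \<le> s"
    and threshold: "\<And>e. e \<in> edges G \<Longrightarrow> M ^ Suc (level e) \<le> s \<longleftrightarrow> level e \<le> \<kappa>"
    using level_threshold[OF e\<^sub>0(1,3)] by metis
  define Z where "Z = hub_zone \<kappa> (hub \<kappa> (fst u))"
  have "key (fst u) \<le> \<kappa>"
    using \<kappa>(1) level_edge[OF e\<^sub>0(1)] mem_edge_iff[OF e\<^sub>0(1)] e\<^sub>0(2) by auto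
  then have "u \<in> Z"
    unfolding Z_def hub_zone_def using u by simp
  moreover have zone: "zone Z s"
    unfolding Z_def by (rule hub_zone_is_zone[OF threshold])
  moreover have "M ^ 1 \<le> M ^ Suc \<kappa>"
    using M_ge_2 by (intro power_increasing) auto
  then have Ms: "M \<le> s"
    using \<kappa>(2) unfolding power_one_right by (rule le_trans)
  moreover have short: "M * M ^ Suc (level e) \<le> s" if "e \<in> edges G" "level e < \<kappa>" for e
  proof -
    have "M * M ^ Suc (level e) \<le> M ^ Suc \<kappa>"
      using that(2) M_ge_2 power_increasing[of "Suc (Suc (level e))" "Suc \<kappa>" M] by simp
    then show ?thesis
      using \<kappa>(2) by linarith
  qed
  moreover have few: "card {e \<in> edges G. e \<inter> Z \<noteq> {} \<and> \<kappa> \<le> level e} \<le> k * \<Delta>"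
  proof -
    have "{e \<in> edges G. e \<inter> Z \<noteq> {} \<and> \<kappa> \<le> level e} \<subseteq> {e \<in> edges G. \<exists>z\<in>e. fst z = hub \<kappa> (fst u)}"
      using hub_zone_long_edge unfolding Z_def by blast
    then have "card {e \<in> edges G. e \<inter> Z \<noteq> {} \<and> \<kappa> \<le> level e} \<le> card {e \<in> edges G. \<exists>z\<in>e. fst z = hub \<kappa> (fst u)}"
      using finite_edges by (intro card_mono) auto
    then show ?thesis
      using card_edges_over_vertex[of "hub \<kappa> (fst u)"] by linarith
  qed
  ultimately have "real (zone_count Z s) \<le> (real (k * \<Delta>) + \<epsilon> / 2) * real s"
    using zone_count_le_few_long_edges[OF zone Ms short few] by blast
  then show ?thesis
    using \<open>u \<in> Z\<close> \<open>zone Z s\<close> by (intro exI[of _ Z]) simp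
qed

theorem growth_subdiv_tree:
  assumes "2 \<le> k * \<Delta>"
  shows "real (growth subdiv r) \<le> (real k * real \<Delta> + \<epsilon> / 2) * real r + 1"
proof (rule growth_subdiv_le)
  have "2 \<le> real (k * \<Delta>)"
    using assms by linarith
  then show "2 \<le> real k * real \<Delta> + \<epsilon> / 2"
    using epsilon_nonneg by simp
qed (use exists_zone in simp)

end

context edge_subdivision
begin

lemma growth_subdiv_unit_lengths:
  assumes unit: "\<And>e. e \<in> edges G \<Longrightarrow> L e = 1" and deg: "max_degree_le G 1" and "0 < r"
  shows "growth subdiv r \<le> 2"
  using finite_subdiv
proof (rule growth_le_if_lipschitz_sublevels)
  fix c assume "c \<in> verts subdiv"
  then obtain w where w: "w \<in> verts G" "c = Inl w"
    by (cases rule: verts_subdivE) (use unit in auto)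
  define N where "N = {v. {w, v} \<in> edges G}"
  define Z where "Z = insert w N"
  have N_verts: "N \<subseteq> verts G"
  proof
    fix v assume "v \<in> N"
    then have e: "{w, v} \<in> edges G"
      by (simp add: N_def)
    then have "v = tail {w, v} \<or> v = head {w, v}"
      using mem_edge_iff[OF e, of v] by simp
    then show "v \<in> verts G"
      using tail_head(3,4)[OF e] by auto
  qed
  have "card ((\<lambda>v. {w, v}) ` N) = card N"
    by (rule card_image) (auto intro: inj_onI simp: doubleton_eq_iff)
  moreover have "card ((\<lambda>v. {w, v}) ` N) \<le> card {e \<in> edges G. w \<in> e}"
    using finite_edges unfolding N_def by (intro card_mono) auto
  moreover have "card {e \<in> edges G. w \<in> e} \<le> 1"
    using deg w(1) unfolding max_degree_le_def by blast
  ultimately have "card Z \<le> 2"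
    unfolding Z_def using card_insert_le_m1[of 2 N w] finite_subset[OF N_verts finite_verts] by simp
  have closed: "e \<subseteq> Z" if e: "e \<in> edges G" and x: "x \<in> e" "x \<in> Z" for e x
  proof (cases "x = w")
    case True
    show ?thesis
    proof
      fix y assume y: "y \<in> e"
      show "y \<in> Z"
      proof (cases "y = w")
        case False
        have "{w, y} = {tail e, head e}"
          using mem_edge_iff[OF e, of w] mem_edge_iff[OF e, of y] x(1) True y False by auto
        then have "{w, y} = e"
          using tail_head(1)[OF e] by (rule trans[OF _ sym])
        then show ?thesis
          using e unfolding Z_def N_def by auto
      qed (simp add: Z_def)
    qed
  next
    case False
    then have wx: "{w, x} \<in> edges G"
      using x(2) unfolding Z_def N_def by simp
    have "x \<in> verts G"
      using x(2) w(1) N_verts unfolding Z_def by auto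
    then have "card {e \<in> edges G. x \<in> e} \<le> Suc 0"
      using deg unfolding max_degree_le_def by simp
    moreover have "finite {e \<in> edges G. x \<in> e}"
      using finite_edges by simp
    ultimately have unique: "\<forall>a\<in>{e \<in> edges G. x \<in> e}. \<forall>b\<in>{e \<in> edges G. x \<in> e}. a = b"
      by (simp only: card_le_Suc0_iff_eq)
    have "e \<in> {e \<in> edges G. x \<in> e}" "{w, x} \<in> {e \<in> edges G. x \<in> e}"
      using e x(1) wx by simp_all
    then have "e = {w, x}"
      by (rule unique[rule_format])
    then show ?thesis
      using wx unfolding Z_def N_def by simp
  qed
  have zone: "zone Z r"
    unfolding zone_def
  proof (intro conjI ballI)
    show "Z \<subseteq> verts G"
      unfolding Z_def using w(1) N_verts by simp
    fix e assume e: "e \<in> edges G"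
    have "e \<subseteq> Z \<or> e \<inter> Z = {}"
      using closed[OF e] by blast
    then show "if L e \<le> r then e \<subseteq> Z \<or> e \<inter> Z = {} else \<not> e \<subseteq> Z"
      using unit[OF e] \<open>0 < r\<close> by simp
  qed
  have "zone_count Z r = card Z"
    unfolding zone_count_def using unit by simp
  then have "card {x \<in> verts subdiv. zone_potential Z r x \<le> r} \<le> 2"
    using card_zone_sublevel[OF zone] \<open>card Z \<le> 2\<close> by simp
  moreover have "zone_potential Z r c = 0"
    using w(2) by (simp add: Z_def)
  ultimately show "\<exists>F. lipschitz_graph subdiv F \<and> F c = 0 \<and> card {x \<in> verts subdiv. F x \<le> r} \<le> 2"
    using lipschitz_zone_potential[OF zone] by blast
qed

end

lemma subdivision_growth_max_degree_one:
  fixes G :: "'v ugraph"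
  assumes "ugraph G" "max_degree_le G 1"
  shows "\<exists>(H :: ('v + nat) ugraph) \<phi>. subdivision H G \<phi> \<and> (\<forall>r>0. growth H r \<le> 2)"
proof -
  interpret edge_subdivision G "\<lambda>_. 1"
    using assms(1) by unfold_locales auto
  show ?thesis
    using subdivision_subdiv growth_subdiv_unit_lengths assms(2)
    by (intro exI[of _ subdiv] exI[of _ Inl]) simp
qed

lemma subdivision_growth_tree:
  fixes T :: "'a ugraph" and G :: "('a \<times> nat) ugraph"
  assumes "tree T" "subgraph G (strong_product T (complete_graph k))" "max_degree_le G \<Delta>"
    and "2 \<le> k * \<Delta>" "0 < \<epsilon>"
  shows "\<exists>(H :: (('a \<times> nat) + nat) ugraph) \<phi>. subdivision H G \<phi> \<and>
    (\<forall>r. real (growth H r) \<le> (real k * real \<Delta> + \<epsilon>) * real r + 1)"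
proof -
  obtain r\<^sub>0 key where ranking: "rooted_ranking T r\<^sub>0 key"
    using tree_obtains_rooted_ranking[OF assms(1)] by blast
  define M where "M = nat \<lceil>2 * real (card (verts G) + card (edges G)) / \<epsilon>\<rceil> + 2"
  have "2 * real (card (verts G) + card (edges G)) / \<epsilon> \<le> real M"
    unfolding M_def by linarith
  then have "2 * real (card (verts G) + card (edges G)) \<le> \<epsilon> * real M"
    using assms(5) by (simp add: field_simps)
  then interpret tree_subdivision T r\<^sub>0 key k \<Delta> G M \<epsilon>
    using assms(1-3) ranking by unfold_locales (auto simp: M_def)
  have "real (growth subdiv r) \<le> (real k * real \<Delta> + \<epsilon>) * real r + 1" for r
  proof -
    have "(real k * real \<Delta> + \<epsilon> / 2) * real r \<le> (real k * real \<Delta> + \<epsilon>) * real r"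
      using assms(5) by (intro mult_right_mono) auto
    then show ?thesis
      using growth_subdiv_tree[OF assms(4), of r] by linarith
  qed
  then show ?thesis
    using subdivision_subdiv by (intro exI[of _ subdiv] exI[of _ Inl]) simp
qed

theorem lemma16:
  fixes k \<Delta> :: nat and \<epsilon> :: real
    and T :: "'a ugraph" and G :: "('a \<times> nat) ugraph"
  assumes "k > 0" and "\<Delta> > 0" and "\<epsilon> > 0"
    and "tree T"
    and "subgraph G (strong_product T (complete_graph k))"
    and "max_degree_le G \<Delta>"
  shows "\<exists>(H :: (('a \<times> nat) + nat) ugraph) \<phi>. subdivision H G \<phi> \<and>
           (\<forall>r::nat. r > 0 \<longrightarrow> real (growth H r) \<le> (real k * real \<Delta> + \<epsilon>) * real r + 1)"
proof (cases "k * \<Delta> = 1")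
  case True
  then have "k = 1" "\<Delta> = 1"
    by simp_all
  have "ugraph G"
    using assms(5) unfolding subgraph_def by blast
  moreover have "max_degree_le G 1"
    using assms(6) \<open>\<Delta> = 1\<close> by simp
  ultimately obtain H :: "(('a \<times> nat) + nat) ugraph" and \<phi>
    where H: "subdivision H G \<phi>" "\<forall>r>0. growth H r \<le> 2"
    using subdivision_growth_max_degree_one by blast
  have "real (growth H r) \<le> (real k * real \<Delta> + \<epsilon>) * real r + 1" if "0 < r" for r
  proof -
    have "real (growth H r) \<le> 2"
      using H(2) that by simp
    also have "\<dots> \<le> real r + 1"
      using that by simp
    also have "\<dots> \<le> (real k * real \<Delta> + \<epsilon>) * real r + 1"
      using \<open>k = 1\<close> \<open>\<Delta> = 1\<close> assms(3) by (simp add: algebra_simps)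
    finally show ?thesis .
  qed
  then show ?thesis
    using H(1) by (intro exI[of _ H] exI[of _ \<phi>]) simp
next
  case False
  have "0 < k * \<Delta>"
    using assms(1,2) by simp
  then have "2 \<le> k * \<Delta>"
    using False by linarith
  then obtain H :: "(('a \<times> nat) + nat) ugraph" and \<phi> where "subdivision H G \<phi>"
    "\<forall>r. real (growth H r) \<le> (real k * real \<Delta> + \<epsilon>) * real r + 1"
    using subdivision_growth_tree[OF assms(4-6) _ assms(3)] by blast
  then show ?thesis
    by (intro exI[of _ H] exI[of _ \<phi>]) simp
qed

end
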